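(* Let $E=x_0^{d_1}\otimes\cdots\otimes x_0^{d_r}$, $n=n_1+\cdots+n_r$, and use the orthonormal basis of $T_E\mathbb X_{\mathbf n,\mathbf d}$ consisting of the tensors $e^{(i)}_k$ ($1\le i\le r$, $1\le k\le n_i$) obtained from $E$ by replacing the $i$-th factor $x_0^{d_i}$ by $\sqrt{d_i}\,x_0^{d_i-1}x_k$. Let $F\in N_E\mathbb X_{\mathbf n,\mathbf d}=\mathcal P\oplus\mathcal W\oplus\mathcal G$ be written $F=P+\sum_i W_i+\sum_{i<j}G_{i,j}$ with $P\in\mathcal P$, $W_i\in\mathcal W_i$, $G_{i,j}\in\mathcal G_{i,j}$, where $W_i$ is $E$ with the $i$-th factor replaced by $$f_i=\sum_{1\le k<\ell\le n_i}f_{i,(k,\ell)}\sqrt{d_i(d_i-1)}\,x_0^{d_i-2}x_kx_\ell+\sum_{1\le k\le n_i}f_{i,(k,k)}\sqrt{\tfrac{d_i(d_i-1)}{2}}\,x_0^{d_i-2}x_k^2$$ (set $f_{i,(\ell,k)}:=f_{i,(k,\ell)}$), and $G_{i,j}=\sum_{k=1}^{n_i}\sum_{\ell=1}^{n_j}g_{(i,j),(k,\ell)}\,E^{(i,j)}_{k,\ell}$, where $E^{(i,j)}_{k,\ell}$ is $E$ with the $i$-th factor replaced by $\sqrt{d_i}x_0^{d_i-1}x_k$ and the $j$-th factor replaced by $\sqrt{d_j}x_0^{d_j-1}x_\ell$. Then the Weingarten map $L_F$ of $\mathbb X_{\mathbf n,\mathbf d}$ at $E$ in direction $F$ is represented in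 this basis by the symmetric $n\times n$ block matrix with diagonal blocks $L_i$ and off-diagonal blocks $L_{i,j}$ (block $(j,i)$ equal to $L_{i,j}^T$), where $$L_i=\sqrt{\tfrac{d_i-1}{d_i}}\,\big(c_{k\ell}\,f_{i,(k,\ell)}\big)_{1\le k,\ell\le n_i},\quad c_{kk}=\sqrt2,\ c_{k\ell}=1\ (k\ne\ell),\qquad L_{i,j}=\big(g_{(i,j),(k,\ell)}\big)_{1\le k\le n_i,1\le \ell\le n_j}.$$ In particular $L_F$ depends only on the $\mathcal W$ and $\mathcal G$ components of $F$, and $L_F=0$ if $F\in\mathcal P$.
   Context: $H_{n,d}$: real homogeneous polynomials of degree $d$ in $x_0,\ldots,x_n$ with the Bombieri–Weyl inner product (scaled monomials $\mathbf m_\alpha=\sqrt{\binom d\alpha}x^\alpha$ orthonormal). $\mathbb V_{n,d}:=\{\pm\ell^d\}\cap\{\|f\|=1\}$; $\mathscr H_{\mathbf n,\mathbf d}:=H_{n_1,d_1}\otimes\cdots\otimes H_{n_r,d_r}$ with the inner product making all $\mathbf m_{\alpha_1}\otimes\cdots\otimes\mathbf m_{\alpha_r}$ orthonormal; $\mathbb X_{\mathbf n,\mathbf d}:=\{f_1\otimes\cdots\otimes f_r:f_i\in\mathbb V_{n_i,d_i}\}\subset$ unit sphere. With $(\alpha)_0:=\alpha_0$: $\mathcal W_i:=\operatorname{span}\{\mathbf m_{\alpha_1}\otimes\cdots\otimes\mathbf m_{\alpha_r}:(\alpha_i)_0=d_i-2,(\alpha_k)_0=d_k\ (k\ne i)\}$,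 $\mathcal G_{i,j}:=\operatorname{span}\{\mathbf m_{\alpha_1}\otimes\cdots\otimes\mathbf m_{\alpha_r}:(\alpha_i)_0=d_i-1,(\alpha_j)_0=d_j-1,(\alpha_k)_0=d_k\ (k\ne i,j)\}$ for $i<j$, $\mathcal W=\bigoplus\mathcal W_i$, $\mathcal G=\bigoplus_{i<j}\mathcal G_{i,j}$, $\mathcal P:=(\mathcal W\oplus\mathcal G)^\perp\cap N_E\mathbb X_{\mathbf n,\mathbf d}$; $N_E$ is the orthogonal complement of $T_E$ in $E^\perp$. The Weingarten map $L_F$ is defined by $\langle v,L_F(w)\rangle=\langle\partial v(u)/\partial w|_{u=E},F\rangle$ for tangent $v,w$ and any local tangent field $v(u)$ extending $v$. *)

theory Defs
  imports Complex_Main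
begin

text \<open>
A multi-index for a polynomial in x_0,...,x_n is a function
alpha :: nat => nat with alpha k = 0 for k > n (alpha k = exponent of x_k).
An element of H_{n,d} is represented by its coefficient function
c :: (nat => nat) => real in the ordinary monomial basis x^alpha (supported on
multi-indices of degree d).  Its Bombieri-Weyl coordinates are the coefficients
with respect to the scaled monomials m_alpha = sqrt(binom d alpha) x^alpha.
Factors of the tensor space are indexed by i in {1..r}.  An element of
H_{n_1,d_1} (x) ... (x) H_{n_r,d_r} is represented by its coordinates with
respect to the orthonormal basis m_{alpha_1} (x) ... (x) m_{alpha_r}, i.e. by a
function on tuples a :: nat => nat => nat (a i = alpha_i), vanishing off the
index set.
\<close>

definition MI :: "nat \<Rightarrow> nat \<Rightarrow> (nat \<Rightarrow> nat) set" where
  "MI n d = {\<alpha>. (\<Sum>k\<le>n. \<alpha> k) = d \<and> (\<forall>k>n. \<alpha> k = 0)}"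

definition multinom :: "nat \<Rightarrow> nat \<Rightarrow> (nat \<Rightarrow> nat) \<Rightarrow> real" where
  "multinom n d \<alpha> = fact d / (\<Prod>k\<le>n. fact (\<alpha> k))"

definition Hpoly :: "nat \<Rightarrow> nat \<Rightarrow> ((nat \<Rightarrow> nat) \<Rightarrow> real) \<Rightarrow> bool" where
  "Hpoly n d c \<longleftrightarrow> (\<forall>\<alpha>. \<alpha> \<notin> MI n d \<longrightarrow> c \<alpha> = 0)"

definition peval :: "nat \<Rightarrow> nat \<Rightarrow> ((nat \<Rightarrow> nat) \<Rightarrow> real) \<Rightarrow> (nat \<Rightarrow> real) \<Rightarrow> real" where
  "peval n d c x = (\<Sum>\<alpha>\<in>MI n d. c \<alpha> * (\<Prod>k\<le>n. x k ^ \<alpha> k))"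

definition bw :: "nat \<Rightarrow> nat \<Rightarrow> ((nat \<Rightarrow> nat) \<Rightarrow> real) \<Rightarrow> (nat \<Rightarrow> nat) \<Rightarrow> real" where
  "bw n d c \<alpha> = c \<alpha> / sqrt (multinom n d \<alpha>)"

definition Ver :: "nat \<Rightarrow> nat \<Rightarrow> ((nat \<Rightarrow> nat) \<Rightarrow> real) set" where
  "Ver n d = {c. Hpoly n d c \<and>
     (\<exists>s lf. (s = 1 \<or> s = -1) \<and> (\<forall>x. peval n d c x = s * (\<Sum>k\<le>n. lf k * x k) ^ d)) \<and>
     (\<Sum>\<alpha>\<in>MI n d. (bw n d c \<alpha>)\<^sup>2) = 1}"

definition tidx :: "nat \<Rightarrow> (nat \<Rightarrow> nat) \<Rightarrow> (nat \<Rightarrow> nat) \<Rightarrow> (nat \<Rightarrow> nat \<Rightarrow> nat) set" where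
  "tidx r n d = {a. (\<forall>i\<in>{1..r}. a i \<in> MI (n i) (d i)) \<and> (\<forall>i. i \<notin> {1..r} \<longrightarrow> a i = (\<lambda>_. 0))}"

type_synonym tvec = "(nat \<Rightarrow> nat \<Rightarrow> nat) \<Rightarrow> real"

definition hvec :: "nat \<Rightarrow> (nat \<Rightarrow> nat) \<Rightarrow> (nat \<Rightarrow> nat) \<Rightarrow> tvec \<Rightarrow> bool" where
  "hvec r n d v \<longleftrightarrow> (\<forall>a. a \<notin> tidx r n d \<longrightarrow> v a = 0)"

definition ip :: "nat \<Rightarrow> (nat \<Rightarrow> nat) \<Rightarrow> (nat \<Rightarrow> nat) \<Rightarrow> tvec \<Rightarrow> tvec \<Rightarrow> real" where
  "ip r n d u v = (\<Sum>a\<in>tidx r n d. u a * v a)"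

definition bvec :: "(nat \<Rightarrow> nat \<Rightarrow> nat) \<Rightarrow> tvec" where
  "bvec a = (\<lambda>b. if b = a then 1 else 0)"

definition tensor :: "nat \<Rightarrow> (nat \<Rightarrow> nat) \<Rightarrow> (nat \<Rightarrow> nat) \<Rightarrow>
    (nat \<Rightarrow> (nat \<Rightarrow> nat) \<Rightarrow> real) \<Rightarrow> tvec" where
  "tensor r n d fs = (\<lambda>a. if a \<in> tidx r n d then (\<Prod>i\<in>{1..r}. bw (n i) (d i) (fs i) (a i)) else 0)"

definition SV :: "nat \<Rightarrow> (nat \<Rightarrow> nat) \<Rightarrow> (nat \<Rightarrow> nat) \<Rightarrow> tvec set" where
  "SV r n d = {tensor r n d fs | fs. \<forall>i\<in>{1..r}. fs i \<in> Ver (n i) (d i)}"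

definition curve_deriv :: "nat \<Rightarrow> (nat \<Rightarrow> nat) \<Rightarrow> (nat \<Rightarrow> nat) \<Rightarrow> (real \<Rightarrow> tvec) \<Rightarrow> tvec \<Rightarrow> bool" where
  "curve_deriv r n d \<gamma> D \<longleftrightarrow> hvec r n d D \<and>
     (\<forall>a\<in>tidx r n d. ((\<lambda>t. \<gamma> t a) has_real_derivative D a) (at 0))"

definition tangent :: "nat \<Rightarrow> (nat \<Rightarrow> nat) \<Rightarrow> (nat \<Rightarrow> nat) \<Rightarrow> tvec \<Rightarrow> tvec set" where
  "tangent r n d p = {D. \<exists>\<gamma>. \<gamma> 0 = p \<and> (\<forall>\<^sub>F t in nhds 0. \<gamma> t \<in> SV r n d) \<and> curve_deriv r n d \<gamma> D}"

definition normal :: "nat \<Rightarrow> (nat \<Rightarrow> nat) \<Rightarrow> (nat \<Rightarrow> nat) \<Rightarrow> tvec \<Rightarrow> tvec set" where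
  "normal r n d p = {F. hvec r n d F \<and> ip r n d F p = 0 \<and> (\<forall>v\<in>tangent r n d p. ip r n d F v = 0)}"

text \<open>L is the Weingarten map of X at p in direction F:
  <v, L w> = <dv(u)/dw at u = p, F> for every local tangent field v(u) extending v,
  the derivative in direction w being taken along a curve in X with velocity w.\<close>
definition is_weingarten :: "nat \<Rightarrow> (nat \<Rightarrow> nat) \<Rightarrow> (nat \<Rightarrow> nat) \<Rightarrow> tvec \<Rightarrow> tvec \<Rightarrow> (tvec \<Rightarrow> tvec) \<Rightarrow> bool" where
  "is_weingarten r n d p F L \<longleftrightarrow>
     (\<forall>w\<in>tangent r n d p. L w \<in> tangent r n d p \<and>
        (\<forall>v\<in>tangent r n d p. \<forall>V \<gamma> D.
           \<gamma> 0 = p \<and> (\<forall>\<^sub>F t in nhds 0. \<gamma> t \<in> SV r n d) \<and> curve_deriv r n d \<gamma> w \<and>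
           V p = v \<and> (\<forall>\<^sub>F t in nhds 0. V (\<gamma> t) \<in> tangent r n d (\<gamma> t)) \<and>
           curve_deriv r n d (\<lambda>t. V (\<gamma> t)) D
           \<longrightarrow> ip r n d v (L w) = ip r n d D F))"

definition mono :: "(nat \<Rightarrow> nat) \<Rightarrow> (nat \<Rightarrow> nat) \<Rightarrow> real" where
  "mono \<alpha> = (\<lambda>\<beta>. if \<beta> = \<alpha> then 1 else 0)"

definition mi0 :: "nat \<Rightarrow> nat \<Rightarrow> nat" where
  "mi0 d = (\<lambda>m. if m = 0 then d else 0)"

definition mi1 :: "nat \<Rightarrow> nat \<Rightarrow> nat \<Rightarrow> nat" where
  "mi1 d k = (\<lambda>m. (if m = 0 then d - 1 else 0) + (if m = k then 1 else 0))"

definition mi2 :: "nat \<Rightarrow> nat \<Rightarrow> nat \<Rightarrow> nat \<Rightarrow> nat" where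
  "mi2 d k l = (\<lambda>m. (if m = 0 then d - 2 else 0) + (if m = k then 1 else 0) + (if m = l then 1 else 0))"

definition Epoint :: "nat \<Rightarrow> (nat \<Rightarrow> nat) \<Rightarrow> (nat \<Rightarrow> nat) \<Rightarrow> tvec" where
  "Epoint r n d = tensor r n d (\<lambda>j. mono (mi0 (d j)))"

definition tbasis :: "nat \<Rightarrow> (nat \<Rightarrow> nat) \<Rightarrow> (nat \<Rightarrow> nat) \<Rightarrow> nat \<Rightarrow> nat \<Rightarrow> tvec" where
  "tbasis r n d i k = tensor r n d (\<lambda>j. if j = i then (\<lambda>\<beta>. sqrt (real (d i)) * mono (mi1 (d i) k) \<beta>)
                                       else mono (mi0 (d j)))"

definition Wfac :: "nat \<Rightarrow> nat \<Rightarrow> (nat \<Rightarrow> nat \<Rightarrow> real) \<Rightarrow> (nat \<Rightarrow> nat) \<Rightarrow> real" where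
  "Wfac n d fi = (\<lambda>\<beta>.
     (\<Sum>k\<in>{1..n}. \<Sum>l\<in>{k<..n}. fi k l * sqrt (real d * (real d - 1)) * mono (mi2 d k l) \<beta>) +
     (\<Sum>k\<in>{1..n}. fi k k * sqrt (real d * (real d - 1) / 2) * mono (mi2 d k k) \<beta>))"

definition Wcomp :: "nat \<Rightarrow> (nat \<Rightarrow> nat) \<Rightarrow> (nat \<Rightarrow> nat) \<Rightarrow> (nat \<Rightarrow> nat \<Rightarrow> nat \<Rightarrow> real) \<Rightarrow> nat \<Rightarrow> tvec" where
  "Wcomp r n d f i = tensor r n d (\<lambda>j. if j = i then Wfac (n i) (d i) (f i) else mono (mi0 (d j)))"

definition Ebas :: "nat \<Rightarrow> (nat \<Rightarrow> nat) \<Rightarrow> (nat \<Rightarrow> nat) \<Rightarrow> nat \<Rightarrow> nat \<Rightarrow> nat \<Rightarrow> nat \<Rightarrow> tvec" where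
  "Ebas r n d i j k l = tensor r n d (\<lambda>m.
      if m = i then (\<lambda>\<beta>. sqrt (real (d i)) * mono (mi1 (d i) k) \<beta>)
      else if m = j then (\<lambda>\<beta>. sqrt (real (d j)) * mono (mi1 (d j) l) \<beta>)
      else mono (mi0 (d m)))"

definition Gcomp :: "nat \<Rightarrow> (nat \<Rightarrow> nat) \<Rightarrow> (nat \<Rightarrow> nat) \<Rightarrow> (nat \<Rightarrow> nat \<Rightarrow> nat \<Rightarrow> nat \<Rightarrow> real) \<Rightarrow> nat \<Rightarrow> nat \<Rightarrow> tvec" where
  "Gcomp r n d g i j = (\<lambda>a. \<Sum>k\<in>{1..n i}. \<Sum>l\<in>{1..n j}. g i j k l * Ebas r n d i j k l a)"

text \<open>index sets spanning W_i and G_{i,j}\<close>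
definition Windex :: "nat \<Rightarrow> (nat \<Rightarrow> nat) \<Rightarrow> (nat \<Rightarrow> nat) \<Rightarrow> nat \<Rightarrow> (nat \<Rightarrow> nat \<Rightarrow> nat) set" where
  "Windex r n d i = {a \<in> tidx r n d. a i 0 + 2 = d i \<and> (\<forall>m\<in>{1..r}. m \<noteq> i \<longrightarrow> a m 0 = d m)}"

definition Gindex :: "nat \<Rightarrow> (nat \<Rightarrow> nat) \<Rightarrow> (nat \<Rightarrow> nat) \<Rightarrow> nat \<Rightarrow> nat \<Rightarrow> (nat \<Rightarrow> nat \<Rightarrow> nat) set" where
  "Gindex r n d i j = {a \<in> tidx r n d. a i 0 + 1 = d i \<and> a j 0 + 1 = d j \<and>
       (\<forall>m\<in>{1..r}. m \<noteq> i \<and> m \<noteq> j \<longrightarrow> a m 0 = d m)}"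

definition Pspace :: "nat \<Rightarrow> (nat \<Rightarrow> nat) \<Rightarrow> (nat \<Rightarrow> nat) \<Rightarrow> tvec set" where
  "Pspace r n d = {P \<in> normal r n d (Epoint r n d).
     \<forall>a. ((\<exists>i\<in>{1..r}. a \<in> Windex r n d i) \<or> (\<exists>i\<in>{1..r}. \<exists>j\<in>{i<..r}. a \<in> Gindex r n d i j))
         \<longrightarrow> ip r n d P (bvec a) = 0}"

text \<open>entries of the claimed block matrix, rows indexed by (i,k), columns by (j,l)\<close>
definition Lmat :: "(nat \<Rightarrow> nat) \<Rightarrow> (nat \<Rightarrow> nat \<Rightarrow> nat \<Rightarrow> real) \<Rightarrow> (nat \<Rightarrow> nat \<Rightarrow> nat \<Rightarrow> nat \<Rightarrow> real) \<Rightarrow>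
     nat \<Rightarrow> nat \<Rightarrow> nat \<Rightarrow> nat \<Rightarrow> real" where
  "Lmat d f g i k j l =
     (if i = j then sqrt ((real (d i) - 1) / real (d i)) * (if k = l then sqrt 2 else 1) * f i k l
      else if i < j then g i j k l else g j i l k)"

end

theory Submission
  imports Defs "HOL-Library.FuncSet"
begin

text \<open>Every point of \<open>X\<close> is \<open>\<plusminus> l\<^sub>1^d\<^sub>1 \<otimes> \<dots> \<otimes> l\<^sub>r^d\<^sub>r\<close>, so its Bombieri-Weyl coordinate at a
  multi-index tuple \<open>a\<close> is a product of the numbers \<open>\<plusminus> sqrt (multinom \<alpha>) l^\<alpha>\<close>. These coordinates satisfy
  quadratic relations \<open>q\<^sub>a q\<^sub>E = c q\<^sub>a\<^sub>' q\<^sub>e\<close>, where \<open>a'\<close> lowers one entry of \<open>a\<close> and \<open>e\<close> is a tangent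
  basis index. Differentiating them once at \<open>E\<close> shows that tangent vectors live on the basis
  \<open>e\<^sup>(\<^sup>i\<^sup>)\<^sub>k\<close>, all of which are realised by rotating one linear form in a coordinate plane.
  Differentiating them along a curve, for a tangent field \<open>V\<close> extending \<open>v\<close>, shows that the
  derivative of \<open>V\<close> in direction \<open>w\<close> vanishes off \<open>E\<close>, \<open>T\<^sub>E\<close>, \<open>W\<close> and \<open>G\<close>, and equals an
  explicit symmetric bilinear expression in \<open>v, w\<close> on \<open>W\<close> and \<open>G\<close>. Pairing with \<open>F\<close> then gives
  \<open>\<langle>v, L\<^sub>F w\<rangle> = v\<^sup>T L w\<close> with \<open>L\<close> the claimed block matrix, and \<open>P\<close> contributes nothing.\<close>

definition mpow :: "nat \<Rightarrow> (nat \<Rightarrow> real) \<Rightarrow> (nat \<Rightarrow> nat) \<Rightarrow> real" where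
  "mpow n x \<alpha> = (\<Prod>k\<le>n. x k ^ \<alpha> k)"

lemma MI_0: "MI 0 d = {mi0 d}"
  by (auto simp: MI_def mi0_def fun_eq_iff)

lemma MI_Suc: "MI (Suc n) d = (\<lambda>(j,\<beta>). \<beta>(Suc n := j)) ` (SIGMA j:{..d}. MI n (d-j))"
proof (intro set_eqI iffI)
  fix \<alpha> assume a: "\<alpha> \<in> MI (Suc n) d"
  let ?j = "\<alpha> (Suc n)" and ?\<beta> = "\<alpha>(Suc n := 0)"
  have s: "(\<Sum>k\<le>Suc n. \<alpha> k) = d" using a by (simp add: MI_def)
  have s2: "(\<Sum>k\<le>n. ?\<beta> k) = (\<Sum>k\<le>n. \<alpha> k)" by (intro sum.cong) auto
  have "?j \<le> d" using s by simp
  moreover have "?\<beta> \<in> MI n (d - ?j)" using a s s2 by (auto simp: MI_def)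
  moreover have "\<alpha> = ?\<beta>(Suc n := ?j)" by auto
  ultimately show "\<alpha> \<in> (\<lambda>(j,\<beta>). \<beta>(Suc n := j)) ` (SIGMA j:{..d}. MI n (d-j))"
    by (intro image_eqI[where x="(?j, ?\<beta>)"]) auto
next
  fix \<alpha> assume "\<alpha> \<in> (\<lambda>(j,\<beta>). \<beta>(Suc n := j)) ` (SIGMA j:{..d}. MI n (d-j))"
  then obtain j \<beta> where j: "j \<le> d" and b: "\<beta> \<in> MI n (d - j)" and al: "\<alpha> = \<beta>(Suc n := j)"
    by auto
  have "(\<Sum>k\<le>n. \<alpha> k) = (\<Sum>k\<le>n. \<beta> k)" using al by (intro sum.cong) auto
  then show "\<alpha> \<in> MI (Suc n) d" using b j al by (auto simp: MI_def)
qed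

lemma inj_on_MI_Suc: "inj_on (\<lambda>(j,\<beta>). \<beta>(Suc n := j)) (SIGMA j:{..d}. MI n (d-j))"
proof (rule inj_onI, clarsimp)
  fix j \<beta> j' \<beta>' assume b: "\<beta> \<in> MI n (d - j)" "\<beta>' \<in> MI n (d - j')"
    and e: "\<beta>(Suc n := j) = \<beta>'(Suc n := j')"
  have "j = j'" using fun_cong[OF e, of "Suc n"] by simp
  moreover have "\<beta> = \<beta>'"
  proof
    fix k show "\<beta> k = \<beta>' k"
      using fun_cong[OF e, of k] b by (cases "k = Suc n") (auto simp: MI_def)
  qed
  ultimately show "j = j' \<and> \<beta> = \<beta>'" by simp
qed

lemma finite_MI: "finite (MI n d)"
  by (induction n arbitrary: d) (simp_all add: MI_0 MI_Suc)

lemma sum_MI_Suc: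
  "(\<Sum>\<alpha>\<in>MI (Suc n) d. h \<alpha>) = (\<Sum>j\<le>d. \<Sum>\<beta>\<in>MI n (d-j). h (\<beta>(Suc n := j)))"
proof -
  have "(\<Sum>\<alpha>\<in>MI (Suc n) d. h \<alpha>) = (\<Sum>(j,\<beta>)\<in>(SIGMA j:{..d}. MI n (d-j)). h (\<beta>(Suc n := j)))"
    unfolding MI_Suc by (subst sum.reindex[OF inj_on_MI_Suc]) (simp add: case_prod_unfold)
  also have "\<dots> = (\<Sum>j\<le>d. \<Sum>\<beta>\<in>MI n (d-j). h (\<beta>(Suc n := j)))"
    by (rule sum.Sigma[symmetric]) (auto simp: finite_MI)
  finally show ?thesis .
qed

lemma mpow_upd_Suc: "mpow (Suc n) x (\<beta>(Suc n := j)) = mpow n x \<beta> * x (Suc n) ^ j"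
  unfolding mpow_def by (simp add: atMost_Suc)

lemma mpow_upd_Suc_arg: "mpow n (x(Suc n := t)) \<beta> = mpow n x \<beta>"
  unfolding mpow_def by (intro prod.cong) auto

lemma multinom_pos: "multinom n d \<alpha> > 0"
  unfolding multinom_def by (intro divide_pos_pos prod_pos) auto

lemma multinom_upd_Suc:
  assumes "j \<le> d"
  shows "multinom (Suc n) d (\<beta>(Suc n := j)) = real (d choose j) * multinom n (d - j) \<beta>"
proof -
  have p: "(\<Prod>k\<le>Suc n. fact ((\<beta>(Suc n := j)) k)) = (\<Prod>k\<le>n. fact (\<beta> k)) * (fact j :: real)"
    by (simp add: atMost_Suc)
  have f: "fact j * fact (d - j) * real (d choose j) = fact d"
    using binomial_fact_lemma[OF assms] by (metis of_nat_fact of_nat_mult)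
  have "(\<Prod>k\<le>n. fact (\<beta> k)) > (0::real)" by (intro prod_pos) auto
  then show ?thesis unfolding multinom_def p using f by (simp add: field_simps)
qed

lemma multinomial_expansion:
  "(\<Sum>k\<le>n. x k) ^ d = (\<Sum>\<alpha>\<in>MI n d. multinom n d \<alpha> * mpow n x \<alpha>)"
proof (induction n arbitrary: d)
  case 0
  show ?case by (simp add: MI_0 multinom_def mpow_def mi0_def)
next
  case (Suc n)
  have "(\<Sum>k\<le>Suc n. x k) ^ d = (x (Suc n) + (\<Sum>k\<le>n. x k)) ^ d" by (simp add: add.commute)
  also have "\<dots> = (\<Sum>j\<le>d. real (d choose j) * x (Suc n) ^ j * (\<Sum>k\<le>n. x k) ^ (d - j))"
    by (rule binomial_ring)
  also have "\<dots> = (\<Sum>j\<le>d. \<Sum>\<beta>\<in>MI n (d-j).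
      multinom (Suc n) d (\<beta>(Suc n := j)) * mpow (Suc n) x (\<beta>(Suc n := j)))"
    by (intro sum.cong refl)
      (simp add: Suc.IH sum_distrib_left multinom_upd_Suc mpow_upd_Suc mult_ac)
  also have "\<dots> = (\<Sum>\<alpha>\<in>MI (Suc n) d. multinom (Suc n) d \<alpha> * mpow (Suc n) x \<alpha>)"
    by (rule sum_MI_Suc[symmetric])
  finally show ?case .
qed

text \<open>Induction on the number of variables, viewing the polynomial as univariate in the last one.\<close>

lemma MI_coeff_unique:
  assumes "\<And>x. (\<Sum>\<alpha>\<in>MI n d. h \<alpha> * mpow n x \<alpha>) = 0" "\<alpha> \<in> MI n d"
  shows "h \<alpha> = 0"
  using assms
proof (induction n arbitrary: d h \<alpha>)
  case 0
  from 0(1)[of "\<lambda>_. 1"] 0(2) show ?case by (simp add: MI_0 mpow_def)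
next
  case (Suc n)
  obtain j \<beta> where j: "j \<le> d" and b: "\<beta> \<in> MI n (d - j)" and al: "\<alpha> = \<beta>(Suc n := j)"
    using Suc.prems(2) unfolding MI_Suc by auto
  define c where "c x i = (\<Sum>\<beta>\<in>MI n (d-i). h (\<beta>(Suc n := i)) * mpow n x \<beta>)" for x i
  have "(\<Sum>i\<le>d. c x i * t ^ i) = 0" for x t
  proof -
    have "(\<Sum>i\<le>d. c x i * t ^ i) = (\<Sum>\<alpha>\<in>MI (Suc n) d. h \<alpha> * mpow (Suc n) (x(Suc n := t)) \<alpha>)"
      unfolding sum_MI_Suc c_def
      by (intro sum.cong refl)
        (simp add: sum_distrib_left sum_distrib_right mpow_upd_Suc mpow_upd_Suc_arg mult_ac)
    then show ?thesis using Suc.prems(1) by simp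
  qed
  then have "c x j = 0" for x
    using polyfun_eq_0[of "c x" d] j by (simp add: mult.commute)
  then have "h (\<beta>(Suc n := j)) = 0"
    using Suc.IH[where h="\<lambda>\<beta>. h (\<beta>(Suc n := j))", OF _ b] unfolding c_def by blast
  then show ?case unfolding al .
qed

definition power_form :: "nat \<Rightarrow> nat \<Rightarrow> real \<Rightarrow> (nat \<Rightarrow> real) \<Rightarrow> (nat \<Rightarrow> nat) \<Rightarrow> real" where
  "power_form n d \<sigma> l = (\<lambda>\<alpha>. if \<alpha> \<in> MI n d then \<sigma> * multinom n d \<alpha> * mpow n l \<alpha> else 0)"

definition power_coord :: "nat \<Rightarrow> nat \<Rightarrow> real \<Rightarrow> (nat \<Rightarrow> real) \<Rightarrow> (nat \<Rightarrow> nat) \<Rightarrow> real" where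
  "power_coord n d \<sigma> l \<alpha> = \<sigma> * sqrt (multinom n d \<alpha>) * mpow n l \<alpha>"

lemma bw_power_form: "\<alpha> \<in> MI n d \<Longrightarrow> bw n d (power_form n d \<sigma> l) \<alpha> = power_coord n d \<sigma> l \<alpha>"
  using multinom_pos[of n d \<alpha>] real_sqrt_mult_self[of "multinom n d \<alpha>"]
  unfolding bw_def power_form_def power_coord_def by (simp add: field_simps)

lemma mpow_mult: "mpow n l \<alpha> * mpow n x \<alpha> = mpow n (\<lambda>k. l k * x k) \<alpha>"
  unfolding mpow_def by (simp add: prod.distrib[symmetric] power_mult_distrib)

lemma mpow_square: "(mpow n l \<alpha>)\<^sup>2 = mpow n (\<lambda>k. (l k)\<^sup>2) \<alpha>"
  unfolding mpow_def prod_power_distrib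
  by (intro prod.cong refl) (simp add: power_mult[symmetric] mult.commute)

lemma power_coord_square:
  "\<sigma> = 1 \<or> \<sigma> = -1 \<Longrightarrow> (power_coord n d \<sigma> l \<alpha>)\<^sup>2 = multinom n d \<alpha> * mpow n (\<lambda>k. (l k)\<^sup>2) \<alpha>"
  using multinom_pos[of n d \<alpha>] unfolding power_coord_def
  by (auto simp: power_mult_distrib mpow_square)

lemma norm_power_form:
  "\<sigma> = 1 \<or> \<sigma> = -1 \<Longrightarrow> (\<Sum>\<alpha>\<in>MI n d. (power_coord n d \<sigma> l \<alpha>)\<^sup>2) = (\<Sum>k\<le>n. (l k)\<^sup>2) ^ d"
  by (simp add: power_coord_square multinomial_expansion)

lemma peval_power_form: "peval n d (power_form n d \<sigma> l) x = \<sigma> * (\<Sum>k\<le>n. l k * x k) ^ d"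
  unfolding peval_def multinomial_expansion mpow_def[symmetric]
  by (simp add: power_form_def sum_distrib_left mpow_mult[symmetric] mult_ac)

lemma power_form_in_Ver:
  assumes "\<sigma> = 1 \<or> \<sigma> = -1" "(\<Sum>k\<le>n. (l k)\<^sup>2) ^ d = 1"
  shows "power_form n d \<sigma> l \<in> Ver n d"
proof -
  have "Hpoly n d (power_form n d \<sigma> l)" by (simp add: Hpoly_def power_form_def)
  moreover have "(\<Sum>\<alpha>\<in>MI n d. (bw n d (power_form n d \<sigma> l) \<alpha>)\<^sup>2) = 1"
    using norm_power_form[OF assms(1)] assms(2) by (simp add: bw_power_form)
  ultimately show ?thesis unfolding Ver_def using assms(1) peval_power_form by blast
qed

lemma Ver_imp_power_form:
  assumes "c \<in> Ver n d"
  obtains \<sigma> l where "\<sigma> = 1 \<or> \<sigma> = -1" "(\<Sum>k\<le>n. (l k)\<^sup>2) ^ d = 1" "c = power_form n d \<sigma> l"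
proof -
  obtain s l where s: "s = 1 \<or> s = -1" and pe: "\<And>x. peval n d c x = s * (\<Sum>k\<le>n. l k * x k) ^ d"
    and hp: "Hpoly n d c" and nm: "(\<Sum>\<alpha>\<in>MI n d. (bw n d c \<alpha>)\<^sup>2) = 1"
    using assms unfolding Ver_def by blast
  have eq: "c = power_form n d s l"
  proof
    fix \<alpha> show "c \<alpha> = power_form n d s l \<alpha>"
    proof (cases "\<alpha> \<in> MI n d")
      case True
      have "\<And>x. (\<Sum>\<beta>\<in>MI n d. (c \<beta> - power_form n d s l \<beta>) * mpow n x \<beta>) = 0"
        using pe peval_power_form[of n d s l] unfolding peval_def
        by (simp add: left_diff_distrib sum_subtractf mpow_def)
      from MI_coeff_unique[OF this True] show ?thesis by simp
    next
      case False then show ?thesis using hp by (simp add: Hpoly_def power_form_def)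
    qed
  qed
  have "(\<Sum>k\<le>n. (l k)\<^sup>2) ^ d = 1"
    using nm norm_power_form[OF s, of n d l] eq by (simp add: bw_power_form)
  then show thesis using that s eq by blast
qed

definition segre_point :: "nat \<Rightarrow> (nat \<Rightarrow> nat) \<Rightarrow> (nat \<Rightarrow> nat) \<Rightarrow> (nat \<Rightarrow> real) \<Rightarrow>
    (nat \<Rightarrow> nat \<Rightarrow> real) \<Rightarrow> tvec" where
  "segre_point r n d \<sigma> l = tensor r n d (\<lambda>j. power_form (n j) (d j) (\<sigma> j) (l j))"

definition segre_params :: "nat \<Rightarrow> (nat \<Rightarrow> nat) \<Rightarrow> (nat \<Rightarrow> nat) \<Rightarrow> (nat \<Rightarrow> real) \<Rightarrow>
    (nat \<Rightarrow> nat \<Rightarrow> real) \<Rightarrow> bool" where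
  "segre_params r n d \<sigma> l \<longleftrightarrow>
     (\<forall>j\<in>{1..r}. (\<sigma> j = 1 \<or> \<sigma> j = -1) \<and> (\<Sum>k\<le>n j. (l j k)\<^sup>2) ^ d j = 1)"

lemma segre_point_apply:
  "segre_point r n d \<sigma> l a =
    (if a \<in> tidx r n d then (\<Prod>j\<in>{1..r}. power_coord (n j) (d j) (\<sigma> j) (l j) (a j)) else 0)"
  unfolding segre_point_def tensor_def by (auto simp: tidx_def bw_power_form intro!: prod.cong)

lemma tensor_cong: "(\<And>j. j \<in> {1..r} \<Longrightarrow> fs j = gs j) \<Longrightarrow> tensor r n d fs = tensor r n d gs"
  unfolding tensor_def by (auto intro!: prod.cong ext)

lemma segre_point_in_SV: "segre_params r n d \<sigma> l \<Longrightarrow> segre_point r n d \<sigma> l \<in> SV r n d"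
  unfolding SV_def segre_point_def segre_params_def by (blast intro: power_form_in_Ver)

lemma SV_imp_segre_point:
  assumes "q \<in> SV r n d"
  obtains \<sigma> l where "segre_params r n d \<sigma> l" "q = segre_point r n d \<sigma> l"
proof -
  obtain fs where fs: "\<forall>i\<in>{1..r}. fs i \<in> Ver (n i) (d i)" and q: "q = tensor r n d fs"
    using assms unfolding SV_def by blast
  have "\<forall>i\<in>{1..r}. \<exists>s l. (s = 1 \<or> s = -1) \<and> (\<Sum>k\<le>n i. (l k)\<^sup>2) ^ d i = 1
     \<and> fs i = power_form (n i) (d i) s l"
  proof
    fix i assume "i \<in> {1..r}"
    with fs obtain s l where "s = 1 \<or> s = -1" "(\<Sum>k\<le>n i. (l k)\<^sup>2) ^ d i = 1"
      "fs i = power_form (n i) (d i) s l"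
      using Ver_imp_power_form[of "fs i"] by blast
    then show "\<exists>s l. (s = 1 \<or> s = -1) \<and> (\<Sum>k\<le>n i. (l k)\<^sup>2) ^ d i = 1
     \<and> fs i = power_form (n i) (d i) s l" by blast
  qed
  then obtain \<sigma> l where h: "\<forall>i\<in>{1..r}. (\<sigma> i = 1 \<or> \<sigma> i = -1) \<and> (\<Sum>k\<le>n i. (l i k)\<^sup>2) ^ d i = 1
     \<and> fs i = power_form (n i) (d i) (\<sigma> i) (l i)"
    by (metis bchoice[of "{1..r}"])
  have "segre_params r n d \<sigma> l" using h unfolding segre_params_def by blast
  moreover have "q = segre_point r n d \<sigma> l" unfolding segre_point_def q
    by (rule tensor_cong) (use h in blast)
  ultimately show thesis by (rule that)
qed

lemma prod_atMost_split2:
  fixes h :: "nat \<Rightarrow> 'a::comm_monoid_mult"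
  assumes "k \<noteq> 0" "k \<le> n"
  shows "(\<Prod>m\<le>n. h m) = h 0 * h k * (\<Prod>m\<in>{..n}-{0,k}. h m)"
proof -
  have e: "{..n} = insert 0 (insert k ({..n}-{0,k}))" using assms by auto
  have "prod h {..n} = prod h (insert 0 (insert k ({..n}-{0,k})))" using e by (rule arg_cong)
  also have "\<dots> = h 0 * (prod h (insert k ({..n}-{0,k})))"
    by (rule prod.insert) (use assms in auto)
  also have "prod h (insert k ({..n}-{0,k})) = h k * prod h ({..n}-{0,k})"
    by (rule prod.insert) auto
  finally show ?thesis by (simp add: mult.assoc)
qed

lemma sum_atMost_split2:
  fixes h :: "nat \<Rightarrow> 'a::comm_monoid_add"
  assumes "k \<noteq> 0" "k \<le> n"
  shows "(\<Sum>m\<le>n. h m) = h 0 + h k + (\<Sum>m\<in>{..n}-{0,k}. h m)"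
proof -
  have e: "{..n} = insert 0 (insert k ({..n}-{0,k}))" using assms by auto
  have "sum h {..n} = sum h (insert 0 (insert k ({..n}-{0,k})))" using e by (rule arg_cong)
  also have "\<dots> = h 0 + (sum h (insert k ({..n}-{0,k})))"
    by (rule sum.insert) (use assms in auto)
  also have "sum h (insert k ({..n}-{0,k})) = h k + sum h ({..n}-{0,k})"
    by (rule sum.insert) auto
  finally show ?thesis by (simp add: add.assoc)
qed

definition mi_lower :: "(nat \<Rightarrow> nat) \<Rightarrow> nat \<Rightarrow> nat \<Rightarrow> nat" where
  "mi_lower \<alpha> k = \<alpha>(0 := \<alpha> 0 + 1, k := \<alpha> k - 1)"

definition mi_raise :: "(nat \<Rightarrow> nat) \<Rightarrow> nat \<Rightarrow> nat \<Rightarrow> nat" where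
  "mi_raise \<alpha> k = \<alpha>(0 := \<alpha> 0 - 1, k := \<alpha> k + 1)"

lemma mi0_MI: "mi0 d \<in> MI n d"
  by (simp add: MI_def mi0_def sum.delta)

lemma mi1_MI: "1 \<le> d \<Longrightarrow> k \<in> {1..n} \<Longrightarrow> mi1 d k \<in> MI n d"
  unfolding MI_def mi1_def by (auto simp: sum.distrib sum.delta)

lemma mi2_MI: "2 \<le> d \<Longrightarrow> k \<in> {1..n} \<Longrightarrow> l \<in> {1..n} \<Longrightarrow> mi2 d k l \<in> MI n d"
  unfolding MI_def mi2_def by (auto simp: sum.distrib sum.delta)

lemma mi_lower_MI:
  assumes "\<alpha> \<in> MI n d" "k \<in> {1..n}" "1 \<le> \<alpha> k"
  shows "mi_lower \<alpha> k \<in> MI n d"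
proof -
  have k: "k \<noteq> 0" "k \<le> n" using assms by auto
  have "(\<Sum>m\<le>n. mi_lower \<alpha> k m) = (\<Sum>m\<le>n. \<alpha> m)"
    unfolding sum_atMost_split2[OF k, of "mi_lower \<alpha> k"] sum_atMost_split2[OF k, of \<alpha>]
    using assms(3) k by (simp add: mi_lower_def)
  then show ?thesis using assms k by (auto simp: MI_def mi_lower_def)
qed

lemma mi_raise_MI:
  assumes "\<alpha> \<in> MI n d" "k \<in> {1..n}" "1 \<le> \<alpha> 0"
  shows "mi_raise \<alpha> k \<in> MI n d"
proof -
  have k: "k \<noteq> 0" "k \<le> n" using assms by auto
  have "(\<Sum>m\<le>n. mi_raise \<alpha> k m) = (\<Sum>m\<le>n. \<alpha> m)"
    unfolding sum_atMost_split2[OF k, of "mi_raise \<alpha> k"] sum_atMost_split2[OF k, of \<alpha>]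
    using assms(3) k by (simp add: mi_raise_def)
  then show ?thesis using assms k by (auto simp: MI_def mi_raise_def)
qed

lemma multinom_mi_lower:
  assumes "k \<in> {1..n}" "1 \<le> \<alpha> k"
  shows "multinom n d \<alpha> * \<alpha> k = multinom n d (mi_lower \<alpha> k) * (\<alpha> 0 + 1)"
proof -
  have k: "k \<noteq> 0" "k \<le> n" using assms by auto
  let ?R = "(\<Prod>m\<in>{..n}-{0,k}. fact (\<alpha> m)) :: real"
  have p1: "(\<Prod>m\<le>n. fact (\<alpha> m)) = fact (\<alpha> 0) * fact (\<alpha> k) * ?R"
    by (rule prod_atMost_split2[OF k])
  have p2: "(\<Prod>m\<le>n. fact (mi_lower \<alpha> k m)) = fact (\<alpha> 0 + 1) * fact (\<alpha> k - 1) * ?R"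
    unfolding prod_atMost_split2[OF k, of "\<lambda>m. fact (mi_lower \<alpha> k m)"] using k
    by (simp add: mi_lower_def)
  have R: "?R > 0" by (intro prod_pos) auto
  have f1: "fact (\<alpha> k) = real (\<alpha> k) * fact (\<alpha> k - 1)"
    using assms(2) by (simp add: fact_reduce)
  have f2: "fact (\<alpha> 0 + 1) = real (\<alpha> 0 + 1) * (fact (\<alpha> 0) :: real)" by simp
  have pos: "fact (\<alpha> 0) > (0::real)" "fact (\<alpha> k - 1) > (0::real)" by auto
  define X where "X = fact (\<alpha> 0) * fact (\<alpha> k - 1) * ?R"
  have X: "X > 0" unfolding X_def using R pos by simp
  have ak: "real (\<alpha> k) > 0" using assms(2) by simp
  have "multinom n d \<alpha> = fact d / (real (\<alpha> k) * X)"
    unfolding multinom_def p1 f1 X_def by (simp add: mult_ac)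
  moreover have "multinom n d (mi_lower \<alpha> k) = fact d / (real (\<alpha> 0 + 1) * X)"
    unfolding multinom_def p2 f2 X_def by (simp add: mult_ac)
  ultimately show ?thesis using X ak by simp
qed

lemma mi_lower_mi_raise: "k \<noteq> 0 \<Longrightarrow> 1 \<le> \<alpha> 0 \<Longrightarrow> mi_lower (mi_raise \<alpha> k) k = \<alpha>"
  by (auto simp: mi_lower_def mi_raise_def fun_eq_iff)

lemma multinom_mi_raise:
  assumes "k \<in> {1..n}" "1 \<le> \<alpha> 0"
  shows "multinom n d \<alpha> * \<alpha> 0 = multinom n d (mi_raise \<alpha> k) * (\<alpha> k + 1)"
proof -
  have k: "k \<noteq> 0" using assms by auto
  have "multinom n d (mi_raise \<alpha> k) * mi_raise \<alpha> k k =
      multinom n d (mi_lower (mi_raise \<alpha> k) k) * (mi_raise \<alpha> k 0 + 1)"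
    by (rule multinom_mi_lower) (use assms k in \<open>auto simp: mi_raise_def\<close>)
  moreover have "mi_lower (mi_raise \<alpha> k) k = \<alpha>" by (rule mi_lower_mi_raise) (use k assms(2) in auto)
  moreover have "mi_raise \<alpha> k k = \<alpha> k + 1" "mi_raise \<alpha> k 0 + 1 = \<alpha> 0"
    using k assms(2) by (auto simp: mi_raise_def)
  ultimately show ?thesis by (simp add: mult_ac)
qed

lemma mpow_mi_lower:
  assumes "k \<in> {1..n}" "1 \<le> \<alpha> k"
  shows "mpow n l (mi_lower \<alpha> k) * l k = mpow n l \<alpha> * l 0"
proof -
  have k: "k \<noteq> 0" "k \<le> n" using assms by auto
  have e: "l k ^ (\<alpha> k - 1) * l k = l k ^ \<alpha> k" using assms(2)
    by (metis Suc_diff_le diff_Suc_1 power_Suc2)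
  show ?thesis
    unfolding mpow_def prod_atMost_split2[OF k, of "\<lambda>m. l m ^ mi_lower \<alpha> k m"]
      prod_atMost_split2[OF k, of "\<lambda>m. l m ^ \<alpha> m"]
    using k e by (simp add: mi_lower_def mult_ac)
qed

lemma prod_eq_at_0:
  "finite S \<Longrightarrow> 0 \<in> S \<Longrightarrow> (\<And>m. m \<in> S \<Longrightarrow> m \<noteq> 0 \<Longrightarrow> h m = 1) \<Longrightarrow> prod h S = h 0"
  by (subst prod.remove[of S 0]) (auto intro!: prod.neutral)

lemma mpow_mi0: "mpow n l (mi0 d) = l 0 ^ d"
  unfolding mpow_def by (subst prod_eq_at_0) (auto simp: mi0_def)

lemma mpow_mi1: "k \<in> {1..n} \<Longrightarrow> mpow n l (mi1 d k) = l 0 ^ (d - 1) * l k"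
  unfolding mpow_def
  by (subst prod_atMost_split2[of k n]) (auto simp: mi1_def intro!: prod.neutral)

lemma multinom_mi0: "multinom n d (mi0 d) = 1"
  unfolding multinom_def by (subst prod_eq_at_0) (auto simp: mi0_def)

lemma multinom_mi1: "1 \<le> d \<Longrightarrow> k \<in> {1..n} \<Longrightarrow> multinom n d (mi1 d k) = d"
proof -
  assume a: "1 \<le> d" "k \<in> {1..n}"
  have "(\<Prod>m\<le>n. fact (mi1 d k m)) = (fact (d - 1) :: real)"
    by (subst prod_atMost_split2[of k n]) (use a in \<open>auto simp: mi1_def intro!: prod.neutral\<close>)
  moreover have "(fact d :: real) = d * fact (d - 1)" using a by (simp add: fact_reduce)
  ultimately show ?thesis unfolding multinom_def by simp
qed

lemma multinom_mi2:
  assumes "2 \<le> d" "k \<in> {1..n}" "l \<in> {1..n}"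
  shows "multinom n d (mi2 d k l) =
    (if k = l then real d * (real d - 1) / 2 else real d * (real d - 1))"
proof -
  have fd: "(fact d :: real) = real d * (real d - 1) * fact (d - 2)"
  proof -
    obtain e where e: "d = Suc (Suc e)" using assms(1) by (metis add_2_eq_Suc le_Suc_ex)
    show ?thesis unfolding e by (simp add: algebra_simps)
  qed
  have fp: "fact (d - 2) > (0::real)" by simp
  show ?thesis
  proof (cases "k = l")
    case True
    have "(\<Prod>m\<le>n. fact (mi2 d k l m)) = (fact (d - 2) * 2 :: real)"
      by (subst prod_atMost_split2[of k n])
        (use assms True in \<open>auto simp: mi2_def intro!: prod.neutral\<close>)
    then show ?thesis unfolding multinom_def fd using True fp by simp
  next
    case False
    have "(\<Prod>m\<le>n. fact (mi2 d k l m)) = (fact (d - 2) :: real)"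
    proof (subst prod_atMost_split2[of k n])
      show "fact (mi2 d k l 0) * fact (mi2 d k l k) * (\<Prod>m\<in>{..n} - {0, k}. fact (mi2 d k l m)) =
          (fact (d - 2) :: real)"
      proof -
        have "(\<Prod>m\<in>{..n} - {0, k}. fact (mi2 d k l m)) =
            (fact (mi2 d k l l) :: real) * (\<Prod>m\<in>{..n} - {0, k} - {l}. fact (mi2 d k l m))"
          by (subst prod.remove[of _ l]) (use assms False in auto)
        also have "\<dots> = 1" using assms False by (auto simp: mi2_def intro!: prod.neutral)
        finally show ?thesis using assms False by (simp add: mi2_def)
      qed
    qed (use assms in auto)
    then show ?thesis unfolding multinom_def fd using False fp by simp
  qed
qed

lemma bw_mono_mi0: "bw n d (mono (mi0 d)) \<beta> = (if \<beta> = mi0 d then 1 else 0)"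
  by (simp add: bw_def mono_def multinom_mi0)

lemma prod_indicator:
  "finite S \<Longrightarrow> (\<Prod>j\<in>S. if P j then (1::real) else 0) = (if \<forall>j\<in>S. P j then 1 else 0)"
  by (induction S rule: finite_induct) auto

lemma DERIV_eventually_zero:
  assumes "(f has_real_derivative f') (at 0)" "eventually (\<lambda>t. f t = 0) (nhds 0)"
  shows "f' = 0"
proof -
  have "((\<lambda>_. 0::real) has_real_derivative f') (at 0)"
    using assms(1) DERIV_cong_ev[OF refl assms(2) refl] by simp
  then show ?thesis using DERIV_const DERIV_unique by blast
qed

lemma sum_delta0_sq: "(\<Sum>k\<le>(m::nat). ((if k = 0 then 1 else 0)::real)\<^sup>2) = 1"
proof -
  have "(\<Sum>k\<le>m. ((if k = 0 then 1 else 0)::real)\<^sup>2) = (\<Sum>k\<le>m. if k = 0 then 1 else 0)"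
    by (rule sum.cong) auto
  also have "(\<Sum>k\<le>m. if k = 0 then 1 else 0) = (1::real)" by (subst sum.remove[of _ 0]) auto
  finally show ?thesis .
qed

lemma MI_eq_mi0: "\<alpha> \<in> MI n d \<Longrightarrow> (\<And>k. k \<in> {1..n} \<Longrightarrow> \<alpha> k = 0) \<Longrightarrow> \<alpha> = mi0 d"
proof -
  assume MI: "\<alpha> \<in> MI n d" and z0: "\<And>k. k \<in> {1..n} \<Longrightarrow> \<alpha> k = 0"
  have z: "\<alpha> m = 0" if "m \<noteq> 0" for m
    using that z0[of m] MI by (cases "m \<le> n") (auto simp: MI_def)
  have "(\<Sum>m\<le>n. \<alpha> m) = \<alpha> 0" by (subst sum.remove[of _ 0]) (auto simp: z)
  then have "\<alpha> 0 = d" using MI by (simp add: MI_def)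
  then show ?thesis using z by (auto simp: mi0_def fun_eq_iff)
qed

lemma mpow_delta0:
  assumes MI: "\<alpha> \<in> MI n d"
  shows "mpow n (\<lambda>k. if k = 0 then 1 else 0) \<alpha> = (if \<alpha> = mi0 d then 1 else 0)"
proof -
  have "mpow n (\<lambda>k. if k = 0 then 1 else 0) \<alpha> =
      (\<Prod>k\<in>{..n}-{0}. (if k = 0 then 1 else (0::real)) ^ \<alpha> k)"
    unfolding mpow_def by (subst prod.remove[of _ 0]) auto
  also have "\<dots> = (\<Prod>k\<in>{..n}-{0}. if \<alpha> k = 0 then 1 else 0)"
    by (rule prod.cong) (auto simp: power_0_left)
  also have "\<dots> = (if \<forall>k\<in>{..n}-{0}. \<alpha> k = 0 then 1 else 0)"
    by (rule prod_indicator) auto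
  also have "(\<forall>k\<in>{..n}-{0}. \<alpha> k = 0) \<longleftrightarrow> \<alpha> = mi0 d"
  proof
    assume "\<forall>k\<in>{..n}-{0}. \<alpha> k = 0"
    then show "\<alpha> = mi0 d" by (intro MI_eq_mi0[OF MI]) auto
  qed (auto simp: mi0_def)
  finally show ?thesis by simp
qed

lemma mono_mi0_power_form: "mono (mi0 d) = power_form n d 1 (\<lambda>k. if k = 0 then 1 else 0)"
proof
  fix \<alpha> show "mono (mi0 d) \<alpha> = power_form n d 1 (\<lambda>k. if k = 0 then 1 else 0) \<alpha>"
    using mi0_MI[of d n] by (auto simp: mono_def power_form_def mpow_delta0 multinom_mi0)
qed

definition rotate_coords :: "nat \<Rightarrow> real \<Rightarrow> (nat \<Rightarrow> real) \<Rightarrow> nat \<Rightarrow> real" where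
  "rotate_coords k s L = L(0 := cos s * L 0 - sin s * L k, k := sin s * L 0 + cos s * L k)"

lemma rotate_coords_0: "k \<noteq> 0 \<Longrightarrow> rotate_coords k 0 L = L"
  by (auto simp: rotate_coords_def fun_eq_iff)

lemma rotate_coords_norm:
  assumes "k \<in> {1..m}"
  shows "(\<Sum>j\<le>m. (rotate_coords k s L j)\<^sup>2) = (\<Sum>j\<le>m. (L j)\<^sup>2)"
proof -
  have k: "k \<noteq> 0" "k \<le> m" using assms by auto
  have r: "(\<Sum>j\<in>{..m}-{0,k}. (rotate_coords k s L j)\<^sup>2) = (\<Sum>j\<in>{..m}-{0,k}. (L j)\<^sup>2)"
    by (rule sum.cong) (auto simp: rotate_coords_def)
  have "(cos s * L 0 - sin s * L k)\<^sup>2 + (sin s * L 0 + cos s * L k)\<^sup>2 =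
      (cos s * cos s + sin s * sin s) * ((L 0)\<^sup>2 + (L k)\<^sup>2)"
    by algebra
  also have "\<dots> = (L 0)\<^sup>2 + (L k)\<^sup>2" by (simp only: sin_cos_squared_add3 mult_1)
  finally have "(cos s * L 0 - sin s * L k)\<^sup>2 + (sin s * L 0 + cos s * L k)\<^sup>2 = (L 0)\<^sup>2 + (L k)\<^sup>2" .
  then show ?thesis
    unfolding sum_atMost_split2[OF k, of "\<lambda>j. (rotate_coords k s L j)\<^sup>2"]
      sum_atMost_split2[OF k, of "\<lambda>j. (L j)\<^sup>2"] r
    using k by (simp add: rotate_coords_def)
qed

definition mpow_rest :: "nat \<Rightarrow> nat \<Rightarrow> (nat \<Rightarrow> real) \<Rightarrow> (nat \<Rightarrow> nat) \<Rightarrow> real" where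
  "mpow_rest n k L \<beta> = (\<Prod>m\<in>{..n}-{0,k}. L m ^ \<beta> m)"

lemma mpow_split:
  assumes "k \<in> {1..n}"
  shows "mpow n L \<beta> = L 0 ^ \<beta> 0 * L k ^ \<beta> k * mpow_rest n k L \<beta>"
  unfolding mpow_def mpow_rest_def using assms by (intro prod_atMost_split2) auto

lemma mpow_rest_rotate: "mpow_rest n k (rotate_coords k s L) \<beta> = mpow_rest n k L \<beta>"
  unfolding mpow_rest_def by (rule prod.cong) (auto simp: rotate_coords_def)

lemma mpow_rest_raise: "mpow_rest n k L (mi_raise \<alpha> k) = mpow_rest n k L \<alpha>"
  unfolding mpow_rest_def by (rule prod.cong) (auto simp: mi_raise_def)

lemma mpow_rest_lower: "mpow_rest n k L (mi_lower \<alpha> k) = mpow_rest n k L \<alpha>"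
  unfolding mpow_rest_def by (rule prod.cong) (auto simp: mi_lower_def)

lemma sqrt_sq_mult: "x \<ge> 0 \<Longrightarrow> sqrt (x * x * M) = x * sqrt M"
  by (simp add: real_sqrt_mult)

lemma rotation_monomial_deriv:
  "((\<lambda>s. (cos s * a - sin s * b) ^ p * (sin s * a + cos s * b) ^ q) has_real_derivative
     (real p * a ^ (p - 1) * (- b) * b ^ q + a ^ p * (real q * b ^ (q - 1) * a))) (at 0)"
  by (auto intro!: derivative_eq_intros simp: algebra_simps)

lemma rotate_deriv_raise_term:
  assumes k: "k \<in> {1..n}"
  shows "\<sigma> * sqrt (multinom n d \<alpha>) * mpow_rest n k L \<alpha> *
      (real (\<alpha> 0) * L 0 ^ (\<alpha> 0 - 1) * (- L k) * L k ^ \<alpha> k) =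
    - sqrt (real (\<alpha> 0) * real (\<alpha> k + 1)) * power_coord n d \<sigma> L (mi_raise \<alpha> k)"
proof (cases "\<alpha> 0 = 0")
  case False
  let ?M = "multinom n d"
  have "?M \<alpha> * \<alpha> 0 = ?M (mi_raise \<alpha> k) * (\<alpha> k + 1)"
    using multinom_mi_raise[of k n \<alpha> d] k False by simp
  then have "sqrt (real (\<alpha> 0) * real (\<alpha> k + 1)) * sqrt (?M (mi_raise \<alpha> k)) =
      sqrt (real (\<alpha> 0) * real (\<alpha> 0) * ?M \<alpha>)"
    by (simp add: real_sqrt_mult[symmetric] mult_ac)
  also have "\<dots> = real (\<alpha> 0) * sqrt (?M \<alpha>)" by (rule sqrt_sq_mult) simp
  finally have sq: "sqrt (real (\<alpha> 0) * real (\<alpha> k + 1)) * sqrt (?M (mi_raise \<alpha> k)) =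
      real (\<alpha> 0) * sqrt (?M \<alpha>)" .
  have "mpow n L (mi_raise \<alpha> k) = L 0 ^ (\<alpha> 0 - 1) * L k ^ (\<alpha> k + 1) * mpow_rest n k L \<alpha>"
    unfolding mpow_split[OF k] mpow_rest_raise using k by (simp add: mi_raise_def)
  then show ?thesis unfolding power_coord_def using sq[symmetric] by (simp add: mult_ac)
qed simp

lemma rotate_deriv_lower_term:
  assumes k: "k \<in> {1..n}"
  shows "\<sigma> * sqrt (multinom n d \<alpha>) * mpow_rest n k L \<alpha> *
      (L 0 ^ \<alpha> 0 * (real (\<alpha> k) * L k ^ (\<alpha> k - 1) * L 0)) =
    sqrt (real (\<alpha> k) * real (\<alpha> 0 + 1)) * power_coord n d \<sigma> L (mi_lower \<alpha> k)"
proof (cases "\<alpha> k = 0")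
  case False
  let ?M = "multinom n d"
  have "?M \<alpha> * \<alpha> k = ?M (mi_lower \<alpha> k) * (\<alpha> 0 + 1)"
    using multinom_mi_lower[of k n \<alpha> d] k False by simp
  then have "sqrt (real (\<alpha> k) * real (\<alpha> 0 + 1)) * sqrt (?M (mi_lower \<alpha> k)) =
      sqrt (real (\<alpha> k) * real (\<alpha> k) * ?M \<alpha>)"
    by (simp add: real_sqrt_mult[symmetric] mult_ac)
  also have "\<dots> = real (\<alpha> k) * sqrt (?M \<alpha>)" by (rule sqrt_sq_mult) simp
  finally have sq: "sqrt (real (\<alpha> k) * real (\<alpha> 0 + 1)) * sqrt (?M (mi_lower \<alpha> k)) =
      real (\<alpha> k) * sqrt (?M \<alpha>)" .
  have "mpow n L (mi_lower \<alpha> k) = L 0 ^ (\<alpha> 0 + 1) * L k ^ (\<alpha> k - 1) * mpow_rest n k L \<alpha>"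
    unfolding mpow_split[OF k] mpow_rest_lower using k by (simp add: mi_lower_def)
  then show ?thesis unfolding power_coord_def using sq[symmetric] by (simp add: mult_ac)
qed simp

lemma power_coord_rotate_deriv:
  assumes k: "k \<in> {1..n}"
  shows "((\<lambda>s. power_coord n d \<sigma> (rotate_coords k s L) \<alpha>) has_real_derivative
     sqrt (real (\<alpha> k) * real (\<alpha> 0 + 1)) * power_coord n d \<sigma> L (mi_lower \<alpha> k)
     - sqrt (real (\<alpha> 0) * real (\<alpha> k + 1)) * power_coord n d \<sigma> L (mi_raise \<alpha> k)) (at 0)"
proof -
  define c where "c = \<sigma> * sqrt (multinom n d \<alpha>) * mpow_rest n k L \<alpha>"
  have pc: "power_coord n d \<sigma> (rotate_coords k s L) \<alpha> =
      c * ((cos s * L 0 - sin s * L k) ^ \<alpha> 0 * (sin s * L 0 + cos s * L k) ^ \<alpha> k)" for s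
    unfolding power_coord_def mpow_split[OF k] mpow_rest_rotate c_def using k
    by (simp add: rotate_coords_def mult_ac)
  have "((\<lambda>s. c * ((cos s * L 0 - sin s * L k) ^ \<alpha> 0 * (sin s * L 0 + cos s * L k) ^ \<alpha> k))
      has_real_derivative c * (real (\<alpha> 0) * L 0 ^ (\<alpha> 0 - 1) * (- L k) * L k ^ \<alpha> k
        + L 0 ^ \<alpha> 0 * (real (\<alpha> k) * L k ^ (\<alpha> k - 1) * L 0))) (at 0)"
    by (rule DERIV_cmult[OF rotation_monomial_deriv])
  then show ?thesis
    unfolding pc distrib_left c_def rotate_deriv_raise_term[OF k] rotate_deriv_lower_term[OF k]
    by simp
qed

definition circle_form :: "real \<Rightarrow> (nat \<Rightarrow> real) \<Rightarrow> real \<Rightarrow> nat \<Rightarrow> real" where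
  "circle_form \<rho> u s k = (if k = 0 then cos (\<rho> * s) else sin (\<rho> * s) * u k)"

lemma circle_form_0: "circle_form \<rho> u 0 = (\<lambda>k. if k = 0 then 1 else 0)"
  by (auto simp: circle_form_def)

lemma circle_form_deriv:
  "((\<lambda>s. circle_form \<rho> u s k) has_real_derivative (if k = 0 then 0 else \<rho> * u k)) (at 0)"
  by (cases "k = 0") (auto simp: circle_form_def intro!: derivative_eq_intros)

lemma circle_form_sum_squares:
  "(\<Sum>k\<le>m. (circle_form \<rho> u s k)\<^sup>2) = (cos (\<rho> * s))\<^sup>2 + (sin (\<rho> * s))\<^sup>2 * (\<Sum>k\<in>{1..m}. (u k)\<^sup>2)"
proof -
  have "{..m} - {0} = {1..m}" by auto
  then have "(\<Sum>k\<le>m. (circle_form \<rho> u s k)\<^sup>2) =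
      (cos (\<rho> * s))\<^sup>2 + (\<Sum>k\<in>{1..m}. (circle_form \<rho> u s k)\<^sup>2)"
    by (subst sum.remove[of _ 0]) (auto simp: circle_form_def)
  also have "(\<Sum>k\<in>{1..m}. (circle_form \<rho> u s k)\<^sup>2) = (\<Sum>k\<in>{1..m}. (sin (\<rho> * s))\<^sup>2 * (u k)\<^sup>2)"
    by (rule sum.cong) (auto simp: circle_form_def power_mult_distrib)
  finally show ?thesis by (simp add: sum_distrib_left)
qed

text \<open>Every family of directions \<open>c j\<close> in the span of \<open>x\<^sub>1, \<dots>, x\<^sub>m\<^sub>j\<close> is, up to the factor
  \<open>sqrt (dd j)\<close>, the family of initial velocities of great circles through \<open>x\<^sub>0\<close>.\<close>

lemma circle_params:
  fixes c :: "nat \<Rightarrow> nat \<Rightarrow> real" and m dd :: "nat \<Rightarrow> nat"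
  assumes dd: "\<And>j. j \<in> J \<Longrightarrow> 1 \<le> dd j"
  shows "\<exists>\<rho> u. (\<forall>j s. (\<Sum>k\<le>m j. (circle_form (\<rho> j) (u j) s k)\<^sup>2) = 1) \<and>
    (\<forall>j\<in>J. \<forall>k\<in>{1..m j}. sqrt (dd j) * u j k * \<rho> j = c j k)"
proof -
  define N where "N j = sqrt (\<Sum>k\<in>{1..m j}. (c j k)\<^sup>2)" for j
  define u where "u j k = (if N j = 0 then 0 else c j k / N j)" for j k
  define \<rho> where "\<rho> j = N j / sqrt (dd j)" for j
  have NN: "N j * N j = (\<Sum>k\<in>{1..m j}. (c j k)\<^sup>2)" for j unfolding N_def by (simp add: sum_nonneg)
  have norm: "(\<Sum>k\<le>m j. (circle_form (\<rho> j) (u j) s k)\<^sup>2) = 1" for j s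
  proof (cases "N j = 0")
    case True then show ?thesis unfolding circle_form_sum_squares by (simp add: \<rho>_def)
  next
    case False
    have "(\<Sum>k\<in>{1..m j}. (u j k)\<^sup>2) = (\<Sum>k\<in>{1..m j}. (c j k)\<^sup>2) / (N j * N j)"
      unfolding u_def using False by (simp add: sum_divide_distrib power_divide power2_eq_square)
    also have "\<dots> = 1" using False NN[of j] by (metis divide_self mult_eq_0_iff)
    finally show ?thesis unfolding circle_form_sum_squares by simp
  qed
  have vel: "sqrt (dd j) * u j k * \<rho> j = c j k" if j: "j \<in> J" and k: "k \<in> {1..m j}" for j k
  proof (cases "N j = 0")
    case True
    then have "(\<Sum>k\<in>{1..m j}. (c j k)\<^sup>2) = 0" using NN[of j] by simp
    then have "(c j k)\<^sup>2 = 0" using k by (subst (asm) sum_nonneg_eq_0_iff) auto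
    then show ?thesis using True by (simp add: u_def)
  next
    case False then show ?thesis using dd[OF j] by (simp add: u_def \<rho>_def)
  qed
  show ?thesis by (intro exI[of _ \<rho>] exI[of _ u]) (simp add: norm vel)
qed

lemma sum_offdiag_pairs:
  fixes h :: "nat \<Rightarrow> nat \<Rightarrow> 'a::comm_monoid_add"
  shows "(\<Sum>x\<in>{1..m}. \<Sum>y\<in>{1..m}-{x}. h x y) = (\<Sum>x\<in>{1..m}. \<Sum>y\<in>{x<..m}. h x y + h y x)"
proof -
  have "(\<Sum>y\<in>{1..m}-{x}. h x y) = (\<Sum>y\<in>{x<..m}. h x y) + (\<Sum>y\<in>{y \<in> {1..m}. y < x}. h x y)" for x
  proof -
    have "(\<Sum>y\<in>{1..m}-{x}. h x y) = (\<Sum>y\<in>{x<..m} \<union> {y \<in> {1..m}. y < x}. h x y)"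
      by (rule sum.cong) auto
    also have "\<dots> = (\<Sum>y\<in>{x<..m}. h x y) + (\<Sum>y\<in>{y \<in> {1..m}. y < x}. h x y)"
      by (rule sum.union_disjoint) auto
    finally show ?thesis .
  qed
  moreover have "(\<Sum>x\<in>{1..m}. \<Sum>y\<in>{y \<in> {1..m}. y < x}. h x y) = (\<Sum>y\<in>{1..m}. \<Sum>x\<in>{y<..m}. h x y)"
  proof -
    have "{x. x \<in> {1..m} \<and> y < x} = {y<..m}" for y by auto
    then show ?thesis using sum.swap_restrict[of "{1..m}" "{1..m}" h "\<lambda>x y. y < x"] by simp
  qed
  ultimately show ?thesis by (simp add: sum.distrib)
qed

lemma sum_symmetric_bilinear:
  fixes V W :: "nat \<Rightarrow> real" and B :: "nat \<Rightarrow> nat \<Rightarrow> real"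
  assumes sym: "\<And>k l. B k l = B l k"
  shows "(\<Sum>k\<in>{1..m}. \<Sum>l\<in>{1..m}. V k * B k l * W l) =
    (\<Sum>k\<in>{1..m}. B k k * (V k * W k)) + (\<Sum>k\<in>{1..m}. \<Sum>l\<in>{k<..m}. B k l * (V l * W k + W l * V k))"
proof -
  have "(\<Sum>k\<in>{1..m}. \<Sum>l\<in>{1..m}. V k * B k l * W l) =
      (\<Sum>k\<in>{1..m}. V k * B k k * W k + (\<Sum>l\<in>{1..m}-{k}. V k * B k l * W l))"
    by (intro sum.cong refl) (simp add: sum.remove)
  also have "\<dots> = (\<Sum>k\<in>{1..m}. B k k * (V k * W k)) +
      (\<Sum>k\<in>{1..m}. \<Sum>l\<in>{k<..m}. V k * B k l * W l + V l * B l k * W k)"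
    using sum_offdiag_pairs[of "\<lambda>k l. V k * B k l * W l" m] by (simp add: sum.distrib mult_ac)
  finally show ?thesis using sym by (simp add: algebra_simps)
qed

lemma bw_Wfac:
  assumes dd: "2 \<le> dd"
  shows "bw m dd (Wfac m dd fi) \<beta> =
    (\<Sum>k\<in>{1..m}. \<Sum>l\<in>{k<..m}. fi k l * (if \<beta> = mi2 dd k l then 1 else 0))
      + (\<Sum>k\<in>{1..m}. fi k k * (if \<beta> = mi2 dd k k then 1 else 0))"
proof -
  have M: "0 < multinom m dd \<beta>" by (rule multinom_pos)
  have t1: "fi k l * sqrt (real dd * (real dd - 1)) * mono (mi2 dd k l) \<beta> / sqrt (multinom m dd \<beta>) =
      fi k l * (if \<beta> = mi2 dd k l then 1 else 0)" if "k \<in> {1..m}" "l \<in> {k<..m}" for k l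
    using multinom_mi2[of dd k m l] dd that M by (auto simp: mono_def)
  have t2: "fi k k * sqrt (real dd * (real dd - 1) / 2) * mono (mi2 dd k k) \<beta> /
      sqrt (multinom m dd \<beta>) =
      fi k k * (if \<beta> = mi2 dd k k then 1 else 0)" if "k \<in> {1..m}" for k
  proof (cases "\<beta> = mi2 dd k k")
    case True
    then have "real dd * (real dd - 1) / 2 = multinom m dd \<beta>"
      using multinom_mi2[of dd k m k] dd that by simp
    then show ?thesis using True M by (simp add: mono_def del: times_divide_eq_right)
  qed (simp add: mono_def)
  show ?thesis unfolding bw_def Wfac_def add_divide_distrib sum_divide_distrib using t1 t2 by simp
qed

lemma sqrt_half2: "sqrt (a / (2 * b)) * 2 = sqrt (a / b) * sqrt 2"
proof -
  have e: "a / (2 * b) = (a / b) / 2" by (simp add: mult.commute)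
  have "sqrt (a / (2 * b)) = sqrt (a / b) / sqrt 2" unfolding e by (rule real_sqrt_divide)
  moreover have "2 / sqrt 2 = sqrt (2::real)" by (rule real_div_sqrt) simp
  ultimately show ?thesis by (metis times_divide_eq_left times_divide_eq_right)
qed

lemma power_coord_lower_relation:
  assumes d: "1 \<le> d" and k: "k \<in> {1..n}" and p: "1 \<le> \<alpha> k"
  shows "power_coord n d \<sigma> l \<alpha> * power_coord n d \<sigma> l (mi0 d) =
    sqrt ((real (\<alpha> 0) + 1) / (real (\<alpha> k) * real d)) * power_coord n d \<sigma> l (mi_lower \<alpha> k)
      * power_coord n d \<sigma> l (mi1 d k)"
proof -
  let ?M = "multinom n d" and ?c = "sqrt ((real (\<alpha> 0) + 1) / (real (\<alpha> k) * real d))"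
  have "?M \<alpha> * \<alpha> k = ?M (mi_lower \<alpha> k) * (\<alpha> 0 + 1)" using multinom_mi_lower[of k n \<alpha> d] k p by simp
  then have "(real (\<alpha> 0) + 1) / (real (\<alpha> k) * real d) * ?M (mi_lower \<alpha> k) * d = ?M \<alpha>"
    using d p by (simp add: field_simps)
  then have sq: "?c * sqrt (?M (mi_lower \<alpha> k)) * sqrt d = sqrt (?M \<alpha>)"
    by (metis real_sqrt_mult)
  have pw: "mpow n l (mi_lower \<alpha> k) * l k = mpow n l \<alpha> * l 0"
    using mpow_mi_lower[of k n \<alpha> l] k p by simp
  have l0: "l 0 ^ (d - 1) * l 0 = l 0 ^ d" using d by (simp flip: power_Suc2)
  have "power_coord n d \<sigma> l \<alpha> * power_coord n d \<sigma> l (mi0 d) =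
      \<sigma> * \<sigma> * sqrt (?M \<alpha>) * mpow n l \<alpha> * l 0 ^ d"
    by (simp add: power_coord_def multinom_mi0 mpow_mi0 mult_ac)
  also have "\<dots> = \<sigma> * \<sigma> * (?c * sqrt (?M (mi_lower \<alpha> k)) * sqrt d) * (mpow n l (mi_lower \<alpha> k) * l k)
      * l 0 ^ (d - 1)"
    unfolding sq pw l0[symmetric] by (simp add: mult_ac)
  also have "\<dots> = ?c * power_coord n d \<sigma> l (mi_lower \<alpha> k) * power_coord n d \<sigma> l (mi1 d k)"
    using d k by (simp add: power_coord_def multinom_mi1 mpow_mi1 mult_ac)
  finally show ?thesis .
qed

locale segre_veronese =
  fixes r :: nat and n d :: "nat \<Rightarrow> nat"
  assumes nd: "\<And>i. i \<in> {1..r} \<Longrightarrow> 1 \<le> n i \<and> 1 \<le> d i"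
begin

abbreviation "T \<equiv> tidx r n d"
abbreviation "E \<equiv> Epoint r n d"

text \<open>Indices of the tensor basis: \<open>idx0\<close> is that of \<open>E\<close>, \<open>idx1 i k\<close> that of \<open>e\<^sup>(\<^sup>i\<^sup>)\<^sub>k\<close>,
  \<open>idx2 i k l\<close> and \<open>idx11 i j k l\<close> span \<open>W\<^sub>i\<close> and \<open>G\<^sub>i\<^sub>,\<^sub>j\<close>. \<open>lower a i k\<close> moves one degree of
  the \<open>i\<close>-th factor from \<open>x\<^sub>k\<close> to \<open>x\<^sub>0\<close>, \<open>raise a i k\<close> moves it back.\<close>

definition idx0 :: "nat \<Rightarrow> nat \<Rightarrow> nat" where
  "idx0 = (\<lambda>i. if i \<in> {1..r} then mi0 (d i) else (\<lambda>_. 0))"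
definition idx1 :: "nat \<Rightarrow> nat \<Rightarrow> nat \<Rightarrow> nat \<Rightarrow> nat" where
  "idx1 i k = idx0(i := mi1 (d i) k)"
definition idx2 :: "nat \<Rightarrow> nat \<Rightarrow> nat \<Rightarrow> nat \<Rightarrow> nat \<Rightarrow> nat" where
  "idx2 i k l = idx0(i := mi2 (d i) k l)"
definition idx11 :: "nat \<Rightarrow> nat \<Rightarrow> nat \<Rightarrow> nat \<Rightarrow> nat \<Rightarrow> nat \<Rightarrow> nat" where
  "idx11 i j k l = idx0(i := mi1 (d i) k, j := mi1 (d j) l)"
definition lower :: "(nat \<Rightarrow> nat \<Rightarrow> nat) \<Rightarrow> nat \<Rightarrow> nat \<Rightarrow> nat \<Rightarrow> nat \<Rightarrow> nat" where
  "lower a i k = a(i := mi_lower (a i) k)"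
definition raise :: "(nat \<Rightarrow> nat \<Rightarrow> nat) \<Rightarrow> nat \<Rightarrow> nat \<Rightarrow> nat \<Rightarrow> nat \<Rightarrow> nat" where
  "raise a i k = a(i := mi_raise (a i) k)"
definition idx_extend :: "(nat \<Rightarrow> nat \<Rightarrow> nat) \<Rightarrow> nat \<Rightarrow> nat \<Rightarrow> nat" where
  "idx_extend g = (\<lambda>i. if i \<in> {1..r} then g i else (\<lambda>_. 0))"

lemma idx_extend_in_T: "(\<forall>i\<in>{1..r}. g i \<in> MI (n i) (d i)) \<Longrightarrow> idx_extend g \<in> T"
  by (auto simp: tidx_def idx_extend_def)

lemma T_subset_idx_extend: "T \<subseteq> idx_extend ` PiE {1..r} (\<lambda>i. MI (n i) (d i))"
proof
  fix a assume a: "a \<in> T"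
  have "a = idx_extend (restrict a {1..r})"
    using a by (auto simp: tidx_def idx_extend_def fun_eq_iff)
  moreover have "restrict a {1..r} \<in> PiE {1..r} (\<lambda>i. MI (n i) (d i))"
    using a by (auto simp: tidx_def)
  ultimately show "a \<in> idx_extend ` PiE {1..r} (\<lambda>i. MI (n i) (d i))" by blast
qed

lemma finite_T: "finite T"
  by (rule finite_subset[OF T_subset_idx_extend]) (auto intro: finite_PiE finite_MI)

lemma sum_T_prod:
  fixes h :: "nat \<Rightarrow> (nat \<Rightarrow> nat) \<Rightarrow> real"
  shows "(\<Sum>a\<in>T. \<Prod>i\<in>{1..r}. h i (a i)) = (\<Prod>i\<in>{1..r}. \<Sum>\<beta>\<in>MI (n i) (d i). h i \<beta>)"
proof -
  have "(\<Prod>i\<in>{1..r}. \<Sum>\<beta>\<in>MI (n i) (d i). h i \<beta>) =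
      (\<Sum>g\<in>PiE {1..r} (\<lambda>i. MI (n i) (d i)). \<Prod>i\<in>{1..r}. h i (g i))"
    by (rule prod_sum_PiE[where f=h]) (auto simp: finite_MI)
  also have "\<dots> = (\<Sum>a\<in>T. \<Prod>i\<in>{1..r}. h i (a i))"
  proof (rule sum.reindex_bij_witness[where j = idx_extend and i = "\<lambda>a. restrict a {1..r}"])
    fix g assume g: "g \<in> PiE {1..r} (\<lambda>i. MI (n i) (d i))"
    show "restrict (idx_extend g) {1..r} = g"
      using g by (auto simp: idx_extend_def fun_eq_iff PiE_def extensional_def)
    show "idx_extend g \<in> T" using g by (intro idx_extend_in_T) auto
    show "(\<Prod>i\<in>{1..r}. h i (idx_extend g i)) = (\<Prod>i\<in>{1..r}. h i (g i))"
      by (intro prod.cong) (auto simp: idx_extend_def)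
  next
    fix a assume a: "a \<in> T"
    show "idx_extend (restrict a {1..r}) = a"
      using a by (auto simp: tidx_def idx_extend_def fun_eq_iff)
    show "restrict a {1..r} \<in> PiE {1..r} (\<lambda>i. MI (n i) (d i))" using a by (auto simp: tidx_def)
  qed
  finally show ?thesis ..
qed

lemma idx0_in_T: "idx0 \<in> T"
  unfolding idx0_def by (auto simp: tidx_def mi0_MI)

lemma idx1_in_T: "i \<in> {1..r} \<Longrightarrow> k \<in> {1..n i} \<Longrightarrow> idx1 i k \<in> T"
  unfolding idx1_def using idx0_in_T nd by (auto simp: tidx_def mi1_MI)

lemma idx1_ne_idx0: "i \<in> {1..r} \<Longrightarrow> k \<in> {1..n i} \<Longrightarrow> idx1 i k \<noteq> idx0"
proof
  assume "i \<in> {1..r}" "k \<in> {1..n i}" "idx1 i k = idx0"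
  then have "idx1 i k i k = idx0 i k" by simp
  then show False using \<open>i \<in> {1..r}\<close> \<open>k \<in> {1..n i}\<close> by (simp add: idx1_def idx0_def mi1_def mi0_def)
qed

lemma idx1_eq_iff:
  assumes "i \<in> {1..r}" "k \<in> {1..n i}" "j \<in> {1..r}" "l \<in> {1..n j}"
  shows "idx1 i k = idx1 j l \<longleftrightarrow> i = j \<and> k = l"
proof
  assume e: "idx1 i k = idx1 j l"
  have e2: "idx1 i k i k = idx1 j l i k" using e by simp
  have k0: "k \<noteq> 0" using assms by simp
  have lhs: "idx1 i k i k = 1" using k0 by (simp add: idx1_def mi1_def)
  show "i = j \<and> k = l"
  proof (cases "i = j")
    case True
    have "idx1 j l i k = (if k = l then 1 else 0)" using True k0 by (simp add: idx1_def mi1_def)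
    then have "k = l" using e2 lhs by (cases "k = l") auto
    then show ?thesis using True by simp
  next
    case False
    have "idx1 j l i k = 0" using False k0 assms(1) by (simp add: idx1_def idx0_def mi0_def)
    then show ?thesis using e2 lhs by simp
  qed
qed simp

lemma sum_idx1_delta:
  fixes c :: "nat \<Rightarrow> nat \<Rightarrow> real"
  assumes i: "i \<in> {1..r}" and k: "k \<in> {1..n i}"
    and P: "\<And>j m. j \<in> {1..r} \<Longrightarrow> m \<in> {1..n j} \<Longrightarrow> P j m \<longleftrightarrow> j = i \<and> m = k"
  shows "(\<Sum>j\<in>{1..r}. \<Sum>m\<in>{1..n j}. c j m * (if P j m then 1 else 0)) = c i k"
proof -
  have "(\<Sum>m\<in>{1..n j}. c j m * (if P j m then 1 else 0)) = (if j = i then c i k else 0)"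
    if j: "j \<in> {1..r}" for j
  proof -
    have "(\<Sum>m\<in>{1..n j}. c j m * (if P j m then 1 else 0)) =
        (\<Sum>m\<in>{1..n j}. if j = i \<and> m = k then c j m else 0)"
      by (rule sum.cong) (use P[OF j] in auto)
    also have "\<dots> = (if j = i then c i k else 0)" using k by (cases "j = i") (auto simp: sum.delta')
    finally show ?thesis .
  qed
  then show ?thesis using i by (simp add: sum.delta')
qed

lemma lower_in_T: "a \<in> T \<Longrightarrow> i \<in> {1..r} \<Longrightarrow> k \<in> {1..n i} \<Longrightarrow> 1 \<le> a i k \<Longrightarrow> lower a i k \<in> T"
  unfolding lower_def by (auto simp: tidx_def intro!: mi_lower_MI)

lemma raise_in_T: "a \<in> T \<Longrightarrow> i \<in> {1..r} \<Longrightarrow> k \<in> {1..n i} \<Longrightarrow> 1 \<le> a i 0 \<Longrightarrow> raise a i k \<in> T"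
  unfolding raise_def by (auto simp: tidx_def intro!: mi_raise_MI)

lemma raise_ne_idx0: "i \<in> {1..r} \<Longrightarrow> k \<in> {1..n i} \<Longrightarrow> raise a i k \<noteq> idx0"
proof
  assume "i \<in> {1..r}" "k \<in> {1..n i}" "raise a i k = idx0"
  then have "raise a i k i k = idx0 i k" by simp
  then show False
    using \<open>i \<in> {1..r}\<close> \<open>k \<in> {1..n i}\<close> by (simp add: raise_def mi_raise_def idx0_def mi0_def)
qed

lemma lower_eq_idx0:
  assumes a: "a \<in> T" and i: "i \<in> {1..r}" and k: "k \<in> {1..n i}" and p: "1 \<le> a i k"
    and e: "lower a i k = idx0"
  shows "a = idx1 i k"
proof
  fix j show "a j = idx1 i k j"
  proof (cases "j = i")
    case False
    then show ?thesis using fun_cong[OF e, of j] by (simp add: lower_def idx1_def)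
  next
    case True
    have ai: "mi_lower (a i) k = mi0 (d i)"
      using fun_cong[OF e, of i] i by (simp add: lower_def idx0_def)
    have MI: "a i \<in> MI (n i) (d i)" using a i by (simp add: tidx_def)
    show ?thesis
    proof
      fix m
      have k0: "k \<noteq> 0" using k by simp
      have c0: "a i 0 + 1 = d i" using fun_cong[OF ai, of 0] k0 by (simp add: mi_lower_def mi0_def)
      have ck: "a i k = 1" using fun_cong[OF ai, of k] k0 p by (simp add: mi_lower_def mi0_def)
      have cm: "m \<noteq> 0 \<Longrightarrow> m \<noteq> k \<Longrightarrow> a i m = 0"
        using fun_cong[OF ai, of m] by (simp add: mi_lower_def mi0_def)
      show "a j m = idx1 i k j m" using True c0 ck cm k0
        by (cases "m = 0"; cases "m = k") (auto simp: idx1_def mi1_def)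
    qed
  qed
qed

lemma exists_positive_entry:
  assumes a: "a \<in> T" and ne: "a \<noteq> idx0"
  shows "\<exists>i\<in>{1..r}. \<exists>k\<in>{1..n i}. 1 \<le> a i k"
proof (rule ccontr)
  assume c: "\<not> ?thesis"
  have "a = idx0"
  proof
    fix i show "a i = idx0 i"
    proof (cases "i \<in> {1..r}")
      case False then show ?thesis using a by (auto simp: tidx_def idx0_def)
    next
      case True
      have MI: "a i \<in> MI (n i) (d i)" using a True by (simp add: tidx_def)
      have z: "a i m = 0" if m: "m \<noteq> 0" for m
      proof (cases "m \<le> n i")
        case True
        then have "m \<in> {1..n i}" using m by simp
        then have "\<not> 1 \<le> a i m" using c \<open>i \<in> {1..r}\<close> by blast
        then show ?thesis by simp
      next
        case False then show ?thesis using MI by (simp add: MI_def)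
      qed
      have "(\<Sum>m\<le>n i. a i m) = a i 0" by (subst sum.remove[of _ 0]) (auto simp: z)
      then have "a i 0 = d i" using MI by (simp add: MI_def)
      then show ?thesis using True z by (auto simp: idx0_def mi0_def fun_eq_iff)
    qed
  qed
  then show False using ne by simp
qed

definition idx1_set :: "(nat \<Rightarrow> nat \<Rightarrow> nat) set" where
  "idx1_set = {idx1 i k | i k. i \<in> {1..r} \<and> k \<in> {1..n i}}"

lemma exists_lowerable_entry:
  assumes a: "a \<in> T" "a \<noteq> idx0" "a \<notin> idx1_set"
  shows "\<exists>i\<in>{1..r}. \<exists>k\<in>{1..n i}. 1 \<le> a i k \<and> lower a i k \<noteq> idx0"
proof -
  obtain i k where ik: "i \<in> {1..r}" "k \<in> {1..n i}" "1 \<le> a i k"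
    using exists_positive_entry[OF a(1,2)] by blast
  have "lower a i k \<noteq> idx0"
  proof
    assume "lower a i k = idx0"
    then have "a = idx1 i k" using lower_eq_idx0[OF a(1) ik] by simp
    then show False using a(3) ik unfolding idx1_set_def by blast
  qed
  then show ?thesis using ik by blast
qed

lemma tensor_split:
  assumes "i \<in> {1..r}"
  shows "tensor r n d fs a = (if a \<in> T then
    bw (n i) (d i) (fs i) (a i) * (\<Prod>j\<in>{1..r}-{i}. bw (n j) (d j) (fs j) (a j)) else 0)"
  unfolding tensor_def using assms by (simp add: prod.remove)

lemma Epoint_eq: "Epoint r n d = (\<lambda>a. if a = idx0 then 1 else 0)"
proof
  fix a
  show "Epoint r n d a = (if a = idx0 then 1 else 0)"
  proof (cases "a \<in> T")
    case True
    have "Epoint r n d a = (\<Prod>j\<in>{1..r}. if a j = mi0 (d j) then 1 else 0)"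
      unfolding Epoint_def tensor_def
      using True by (auto simp: tidx_def bw_mono_mi0 intro!: prod.cong)
    also have "\<dots> = (if a = idx0 then 1 else 0)"
      using True by (subst prod_indicator) (auto simp: idx0_def tidx_def fun_eq_iff)
    finally show ?thesis .
  next
    case False then show ?thesis using idx0_in_T by (auto simp: Epoint_def tensor_def)
  qed
qed

lemma tbasis_eq:
  assumes i: "i \<in> {1..r}" and k: "k \<in> {1..n i}"
  shows "tbasis r n d i k = (\<lambda>a. if a = idx1 i k then 1 else 0)"
proof
  fix a
  show "tbasis r n d i k a = (if a = idx1 i k then 1 else 0)"
  proof (cases "a \<in> T")
    case True
    have d1: "1 \<le> d i" using nd i by simp
    have bi: "bw (n i) (d i) (\<lambda>\<beta>. sqrt (real (d i)) * mono (mi1 (d i) k) \<beta>) (a i) =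
        (if a i = mi1 (d i) k then 1 else 0)"
      using d1 k by (simp add: bw_def mono_def multinom_mi1)
    have "tbasis r n d i k a =
        (if a i = mi1 (d i) k then 1 else 0) * (\<Prod>j\<in>{1..r}-{i}. if a j = mi0 (d j) then 1 else 0)"
      unfolding tbasis_def tensor_split[OF i] using True bi
      by (auto simp: tidx_def bw_mono_mi0 intro!: prod.cong)
    also have "\<dots> = (if a = idx1 i k then 1 else 0)"
      using True i by (subst prod_indicator) (auto simp: idx1_def idx0_def tidx_def fun_eq_iff)
    finally show ?thesis .
  next
    case False then show ?thesis using idx1_in_T[OF i k] by (auto simp: tbasis_def tensor_def)
  qed
qed

lemma Ebas_eq:
  assumes i: "i \<in> {1..r}" and j: "j \<in> {1..r}" and ij: "i \<noteq> j"
    and k: "k \<in> {1..n i}" and l: "l \<in> {1..n j}"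
  shows "Ebas r n d i j k l = (\<lambda>a. if a = idx11 i j k l then 1 else 0)"
proof
  fix a
  have d1: "1 \<le> d i" "1 \<le> d j" using nd i j by auto
  have gT: "idx11 i j k l \<in> T" using idx0_in_T i j k l d1 by (auto simp: idx11_def tidx_def mi1_MI)
  show "Ebas r n d i j k l a = (if a = idx11 i j k l then 1 else 0)"
  proof (cases "a \<in> T")
    case True
    have "Ebas r n d i j k l a = (\<Prod>m\<in>{1..r}. if a m = idx11 i j k l m then 1 else 0)"
      unfolding Ebas_def tensor_def using True ij d1 k l
      by (auto simp: tidx_def bw_mono_mi0 bw_def mono_def multinom_mi1 multinom_mi0 idx11_def
          idx0_def intro!: prod.cong)
    also have "\<dots> = (if a = idx11 i j k l then 1 else 0)"
      using True gT by (subst prod_indicator) (auto simp: tidx_def fun_eq_iff)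
    finally show ?thesis .
  next
    case False then show ?thesis using gT by (auto simp: Ebas_def tensor_def)
  qed
qed

lemma ip_delta_right: "x \<in> T \<Longrightarrow> ip r n d D (\<lambda>a. if a = x then 1 else 0) = D x"
proof -
  assume x: "x \<in> T"
  have "(\<Sum>a\<in>T. D a * (if a = x then 1 else 0)) = (\<Sum>a\<in>T. if a = x then D a else 0)"
    by (rule sum.cong) auto
  then show ?thesis unfolding ip_def using finite_T x by (simp add: sum.delta)
qed

lemma ip_delta_left: "x \<in> T \<Longrightarrow> ip r n d (\<lambda>a. if a = x then 1 else 0) D = D x"
proof -
  assume x: "x \<in> T"
  have "(\<Sum>a\<in>T. (if a = x then 1 else 0) * D a) = (\<Sum>a\<in>T. if a = x then D a else 0)"
    by (rule sum.cong) auto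
  then show ?thesis unfolding ip_def using finite_T x by (simp add: sum.delta)
qed

lemma Epoint_segre_point: "E = segre_point r n d (\<lambda>_. 1) (\<lambda>_ k. if k = 0 then 1 else 0)"
  unfolding Epoint_def segre_point_def by (rule tensor_cong) (simp add: mono_mi0_power_form)

lemma Epoint_in_SV: "E \<in> SV r n d"
proof -
  note Epoint_segre_point
  moreover have "segre_params r n d (\<lambda>_. 1) (\<lambda>_ k. if k = 0 then 1 else 0)"
    unfolding segre_params_def by (simp add: sum_delta0_sq)
  ultimately show ?thesis using segre_point_in_SV by simp
qed

definition lower_coeff :: "(nat \<Rightarrow> nat \<Rightarrow> nat) \<Rightarrow> nat \<Rightarrow> nat \<Rightarrow> real" where
  "lower_coeff a i k = sqrt ((real (a i 0) + 1) / (real (a i k) * real (d i)))"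

lemma segre_point_split:
  assumes "i \<in> {1..r}" "a \<in> T"
  shows "segre_point r n d \<sigma> l a = power_coord (n i) (d i) (\<sigma> i) (l i) (a i) *
    (\<Prod>j\<in>{1..r}-{i}. power_coord (n j) (d j) (\<sigma> j) (l j) (a j))"
  using assms by (simp add: segre_point_apply prod.remove)

lemma SV_quadratic_relation:
  assumes q: "q \<in> SV r n d" and a: "a \<in> T" and i: "i \<in> {1..r}" and k: "k \<in> {1..n i}"
    and p: "1 \<le> a i k"
  shows "q a * q idx0 = lower_coeff a i k * q (lower a i k) * q (idx1 i k)"
proof -
  obtain \<sigma> l where "q = segre_point r n d \<sigma> l" using SV_imp_segre_point[OF q] .
  then have q_split: "q x = power_coord (n i) (d i) (\<sigma> i) (l i) (x i) *
      (\<Prod>j\<in>{1..r}-{i}. power_coord (n j) (d j) (\<sigma> j) (l j) (x j))" if "x \<in> T" for x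
    using segre_point_split[OF i that] by simp
  have "(\<Prod>j\<in>{1..r}-{i}. power_coord (n j) (d j) (\<sigma> j) (l j) (y j)) =
      (\<Prod>j\<in>{1..r}-{i}. power_coord (n j) (d j) (\<sigma> j) (l j) (x j))"
    if "\<And>j. j \<noteq> i \<Longrightarrow> y j = x j" for x y
    using that by (intro prod.cong) auto
  moreover have "power_coord (n i) (d i) (\<sigma> i) (l i) (a i) *
      power_coord (n i) (d i) (\<sigma> i) (l i) (mi0 (d i))
      = lower_coeff a i k * power_coord (n i) (d i) (\<sigma> i) (l i) (mi_lower (a i) k)
          * power_coord (n i) (d i) (\<sigma> i) (l i) (mi1 (d i) k)"
    unfolding lower_coeff_def using nd[OF i] k p by (intro power_coord_lower_relation) auto
  ultimately show ?thesis
    using i unfolding q_split[OF a] q_split[OF idx0_in_T] q_split[OF lower_in_T[OF a i k p]]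
      q_split[OF idx1_in_T[OF i k]]
    by (simp add: idx0_def idx1_def lower_def mult_ac)
qed

lemma SV_norm:
  assumes q: "q \<in> SV r n d"
  shows "(\<Sum>a\<in>T. (q a)\<^sup>2) = 1"
proof -
  obtain \<sigma> l where ok: "segre_params r n d \<sigma> l" and qe: "q = segre_point r n d \<sigma> l"
    using SV_imp_segre_point[OF q] by blast
  have "(\<Sum>a\<in>T. (q a)\<^sup>2) = (\<Sum>a\<in>T. \<Prod>j\<in>{1..r}. (power_coord (n j) (d j) (\<sigma> j) (l j) (a j))\<^sup>2)"
    unfolding qe by (intro sum.cong refl) (simp add: segre_point_apply prod_power_distrib)
  also have "\<dots> = (\<Prod>j\<in>{1..r}. \<Sum>\<beta>\<in>MI (n j) (d j). (power_coord (n j) (d j) (\<sigma> j) (l j) \<beta>)\<^sup>2)"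
    by (rule sum_T_prod)
  also have "\<dots> = 1"
  proof (rule prod.neutral, rule ballI)
    fix j assume j: "j \<in> {1..r}"
    then have s: "\<sigma> j = 1 \<or> \<sigma> j = -1" and nn: "(\<Sum>k\<le>n j. (l j k)\<^sup>2) ^ d j = 1"
      using ok by (auto simp: segre_params_def)
    show "(\<Sum>\<beta>\<in>MI (n j) (d j). (power_coord (n j) (d j) (\<sigma> j) (l j) \<beta>)\<^sup>2) = 1"
      using nn by (simp add: power_coord_square[OF s] multinomial_expansion)
  qed
  finally show ?thesis .
qed

lemma tangent_curveE:
  assumes "u \<in> tangent r n d q"
  obtains \<gamma> where "\<gamma> 0 = q" "\<forall>\<^sub>F t in nhds 0. \<gamma> t \<in> SV r n d" "curve_deriv r n d \<gamma> u"
  using assms unfolding tangent_def by blast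

lemma tangent_hvec: "u \<in> tangent r n d q \<Longrightarrow> hvec r n d u"
  unfolding tangent_def curve_deriv_def by blast

lemma curve_deriv_coord:
  "curve_deriv r n d \<gamma> u \<Longrightarrow> x \<in> T \<Longrightarrow> ((\<lambda>t. \<gamma> t x) has_real_derivative u x) (at 0)"
  unfolding curve_deriv_def by blast

lemma tangent_quadratic_relation:
  assumes q: "q \<in> SV r n d" and u: "u \<in> tangent r n d q" and a: "a \<in> T" and i: "i \<in> {1..r}"
    and k: "k \<in> {1..n i}" and p: "1 \<le> a i k"
  shows "u a * q idx0 + q a * u idx0 =
    lower_coeff a i k * (u (lower a i k) * q (idx1 i k) + q (lower a i k) * u (idx1 i k))"
proof -
  obtain \<gamma> where g0: "\<gamma> 0 = q" and gs: "\<forall>\<^sub>F t in nhds 0. \<gamma> t \<in> SV r n d"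
    and cd: "curve_deriv r n d \<gamma> u"
    using u by (rule tangent_curveE)
  define b where "b = lower a i k"
  define e where "e = idx1 i k"
  have bT: "b \<in> T" unfolding b_def using lower_in_T[OF a i k p] .
  have eT: "e \<in> T" unfolding e_def using idx1_in_T[OF i k] .
  note D = curve_deriv_coord[OF cd]
  have "((\<lambda>t. \<gamma> t a * \<gamma> t idx0 - lower_coeff a i k * (\<gamma> t b * \<gamma> t e)) has_real_derivative
     (u a * \<gamma> 0 idx0 + \<gamma> 0 a * u idx0 - lower_coeff a i k * (u b * \<gamma> 0 e + \<gamma> 0 b * u e))) (at 0)"
    by (auto intro!: derivative_eq_intros D a bT eT idx0_in_T simp: algebra_simps)
  moreover have "\<forall>\<^sub>F t in nhds 0. \<gamma> t a * \<gamma> t idx0 - lower_coeff a i k * (\<gamma> t b * \<gamma> t e) = 0"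
    using gs by (rule eventually_mono) (simp add: SV_quadratic_relation[OF _ a i k p] b_def e_def)
  ultimately have
    "u a * \<gamma> 0 idx0 + \<gamma> 0 a * u idx0 - lower_coeff a i k * (u b * \<gamma> 0 e + \<gamma> 0 b * u e) = 0"
    by (rule DERIV_eventually_zero)
  then show ?thesis unfolding g0 b_def e_def by simp
qed

lemma tangent_orthogonal:
  assumes q: "q \<in> SV r n d" and u: "u \<in> tangent r n d q"
  shows "(\<Sum>a\<in>T. q a * u a) = 0"
proof -
  obtain \<gamma> where g0: "\<gamma> 0 = q" and gs: "\<forall>\<^sub>F t in nhds 0. \<gamma> t \<in> SV r n d"
    and cd: "curve_deriv r n d \<gamma> u"
    using u by (rule tangent_curveE)
  note D = curve_deriv_coord[OF cd]
  have "((\<lambda>t. (\<Sum>a\<in>T. (\<gamma> t a)\<^sup>2) - 1) has_real_derivative (\<Sum>a\<in>T. 2 * (u a * \<gamma> 0 a))) (at 0)"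
    by (auto intro!: derivative_eq_intros D simp: algebra_simps)
  moreover have "\<forall>\<^sub>F t in nhds 0. (\<Sum>a\<in>T. (\<gamma> t a)\<^sup>2) - 1 = 0"
    using gs by (rule eventually_mono) (simp add: SV_norm)
  ultimately have "(\<Sum>a\<in>T. 2 * (u a * \<gamma> 0 a)) = 0" by (rule DERIV_eventually_zero)
  then show ?thesis unfolding g0 by (simp add: sum_distrib_left[symmetric] mult.commute)
qed

lemma tangent_E_idx0: "u \<in> tangent r n d E \<Longrightarrow> u idx0 = 0"
proof -
  assume u: "u \<in> tangent r n d E"
  have "(\<Sum>a\<in>T. E a * u a) = 0" by (rule tangent_orthogonal[OF Epoint_in_SV u])
  moreover have "(\<Sum>a\<in>T. E a * u a) = u idx0"
  proof -
    have "(\<Sum>a\<in>T. E a * u a) = (\<Sum>a\<in>T. if a = idx0 then u a else 0)"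
      by (rule sum.cong) (auto simp: Epoint_eq)
    then show ?thesis using finite_T idx0_in_T by (simp add: sum.delta)
  qed
  ultimately show ?thesis by simp
qed

lemma tangent_E_lowerable:
  assumes u: "u \<in> tangent r n d E" and a: "a \<in> T" and na: "a \<noteq> idx0" and i: "i \<in> {1..r}"
    and k: "k \<in> {1..n i}" and p: "1 \<le> a i k" and b: "lower a i k \<noteq> idx0"
  shows "u a = 0"
  using tangent_quadratic_relation[OF Epoint_in_SV u a i k p] na b idx1_ne_idx0[OF i k]
  by (simp add: Epoint_eq)

lemma tangent_E_support:
  assumes u: "u \<in> tangent r n d E" and nE: "a \<notin> idx1_set"
  shows "u a = 0"
proof (cases "a \<in> T")
  case False then show ?thesis using tangent_hvec[OF u] by (simp add: hvec_def)
next
  case True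
  show ?thesis
  proof (cases "a = idx0")
    case True then show ?thesis using tangent_E_idx0[OF u] by simp
  next
    case False
    obtain i k where "i \<in> {1..r}" "k \<in> {1..n i}" "1 \<le> a i k" "lower a i k \<noteq> idx0"
      using exists_lowerable_entry[OF \<open>a \<in> T\<close> False nE] by blast
    then show ?thesis using tangent_E_lowerable[OF u \<open>a \<in> T\<close> False] by blast
  qed
qed

text \<open>\<open>field_deriv v w \<gamma> V D\<close>: \<open>D\<close> is the derivative, along a curve \<open>\<gamma>\<close> in \<open>X\<close> through \<open>E\<close>
  with velocity \<open>w\<close>, of a tangent vector field \<open>V\<close> extending \<open>v\<close>; these are the data
  quantified over in \<^const>\<open>is_weingarten\<close>.\<close>

definition field_deriv :: "tvec \<Rightarrow> tvec \<Rightarrow> (real \<Rightarrow> tvec) \<Rightarrow> (tvec \<Rightarrow> tvec) \<Rightarrow> tvec \<Rightarrow> bool" where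
  "field_deriv v w \<gamma> V D \<longleftrightarrow> w \<in> tangent r n d E \<and> v \<in> tangent r n d E \<and> \<gamma> 0 = E \<and>
     (\<forall>\<^sub>F t in nhds 0. \<gamma> t \<in> SV r n d) \<and> curve_deriv r n d \<gamma> w \<and> V E = v \<and>
     (\<forall>\<^sub>F t in nhds 0. V (\<gamma> t) \<in> tangent r n d (\<gamma> t)) \<and> curve_deriv r n d (\<lambda>t. V (\<gamma> t)) D"

lemma field_deriv_formula:
  assumes fd: "field_deriv v w \<gamma> V D" and a: "a \<in> T" and na: "a \<noteq> idx0" and i: "i \<in> {1..r}"
    and k: "k \<in> {1..n i}" and p: "1 \<le> a i k" and b: "lower a i k \<noteq> idx0"
  shows "D a =
    lower_coeff a i k * (v (lower a i k) * w (idx1 i k) + w (lower a i k) * v (idx1 i k))"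
proof -
  have w: "w \<in> tangent r n d E" and v: "v \<in> tangent r n d E" and g0: "\<gamma> 0 = E"
    and gs: "\<forall>\<^sub>F t in nhds 0. \<gamma> t \<in> SV r n d" and cdw: "curve_deriv r n d \<gamma> w"
    and V0: "V E = v" and Vt: "\<forall>\<^sub>F t in nhds 0. V (\<gamma> t) \<in> tangent r n d (\<gamma> t)"
    and cdD: "curve_deriv r n d (\<lambda>t. V (\<gamma> t)) D"
    using fd unfolding field_deriv_def by auto
  define B where "B = lower a i k"
  define e where "e = idx1 i k"
  have bT: "B \<in> T" unfolding B_def using lower_in_T[OF a i k p] .
  have eT: "e \<in> T" unfolding e_def using idx1_in_T[OF i k] .
  note DG = curve_deriv_coord[OF cdw] and DV = curve_deriv_coord[OF cdD]
  let ?U = "\<lambda>t. V (\<gamma> t)" and ?c = "lower_coeff a i k"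
  have "((\<lambda>t. ?U t a * \<gamma> t idx0 + \<gamma> t a * ?U t idx0 - ?c * (?U t B * \<gamma> t e + \<gamma> t B * ?U t e))
     has_real_derivative
     (D a * \<gamma> 0 idx0 + ?U 0 a * w idx0 + (w a * ?U 0 idx0 + \<gamma> 0 a * D idx0)
       - ?c * (D B * \<gamma> 0 e + ?U 0 B * w e + (w B * ?U 0 e + \<gamma> 0 B * D e)))) (at 0)"
    by (auto intro!: derivative_eq_intros DG DV a bT eT idx0_in_T simp: algebra_simps)
  moreover have "\<forall>\<^sub>F t in nhds 0.
      ?U t a * \<gamma> t idx0 + \<gamma> t a * ?U t idx0 - ?c * (?U t B * \<gamma> t e + \<gamma> t B * ?U t e) = 0"
    using eventually_conj[OF gs Vt] by (rule eventually_mono)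
      (simp add: tangent_quadratic_relation[OF _ _ a i k p] B_def e_def)
  ultimately have z: "D a * \<gamma> 0 idx0 + ?U 0 a * w idx0 + (w a * ?U 0 idx0 + \<gamma> 0 a * D idx0)
       - ?c * (D B * \<gamma> 0 e + ?U 0 B * w e + (w B * ?U 0 e + \<gamma> 0 B * D e)) = 0"
    by (rule DERIV_eventually_zero)
  have "v a = 0" "w a = 0" using tangent_E_lowerable[OF _ a na i k p b] v w by auto
  moreover have "e \<noteq> idx0" unfolding e_def by (rule idx1_ne_idx0[OF i k])
  ultimately show ?thesis using z g0 V0 tangent_E_idx0[OF v] tangent_E_idx0[OF w] na b
    by (simp add: Epoint_eq B_def e_def algebra_simps)
qed

text \<open>The velocity at \<open>q\<close> of the rotation of the \<open>i\<close>-th linear form in the \<open>(x\<^sub>0, x\<^sub>k)\<close>-plane;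
  as a tangent field it extends \<open>sqrt (d i)\<close> times the tangent basis vector \<open>e\<^sup>(\<^sup>i\<^sup>)\<^sub>k\<close> at \<open>E\<close>.\<close>

definition rot_field :: "nat \<Rightarrow> nat \<Rightarrow> tvec \<Rightarrow> tvec" where
  "rot_field i k q = (\<lambda>a. if a \<in> T then
     - sqrt (real (a i 0) * real (a i k + 1)) * q (raise a i k)
     + sqrt (real (a i k) * real (a i 0 + 1)) * q (lower a i k) else 0)"

lemma rot_field_segre_point_deriv:
  assumes i: "i \<in> {1..r}" and k: "k \<in> {1..n i}" and a: "a \<in> T"
  shows "((\<lambda>s. segre_point r n d \<sigma> (l(i := rotate_coords k s (l i))) a) has_real_derivative
    rot_field i k (segre_point r n d \<sigma> l) a) (at 0)"
proof -
  let ?q = "segre_point r n d \<sigma> l" and ?pc = "power_coord (n i) (d i) (\<sigma> i)"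
  define PR where "PR x = (\<Prod>j\<in>{1..r}-{i}. power_coord (n j) (d j) (\<sigma> j) (l j) (x j))" for x
  have q_split: "?q x = ?pc (l i) (x i) * PR x" if "x \<in> T" for x
    unfolding PR_def by (rule segre_point_split[OF i that])
  have PR_upd: "PR (a(i := \<beta>)) = PR a" for \<beta> unfolding PR_def by (rule prod.cong) auto
  have raise: "sqrt (real (a i 0) * real (a i k + 1)) * ?q (raise a i k) =
      sqrt (real (a i 0) * real (a i k + 1)) * (?pc (l i) (mi_raise (a i) k) * PR a)"
  proof (cases "a i 0 = 0")
    case False
    then show ?thesis using q_split[OF raise_in_T[OF a i k]] PR_upd by (simp add: raise_def)
  qed simp
  have lower: "sqrt (real (a i k) * real (a i 0 + 1)) * ?q (lower a i k) =
      sqrt (real (a i k) * real (a i 0 + 1)) * (?pc (l i) (mi_lower (a i) k) * PR a)"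
  proof (cases "a i k = 0")
    case False
    then show ?thesis using q_split[OF lower_in_T[OF a i k]] PR_upd by (simp add: lower_def)
  qed simp
  have "rot_field i k ?q a = - (sqrt (real (a i 0) * real (a i k + 1)) * ?q (raise a i k))
      + sqrt (real (a i k) * real (a i 0 + 1)) * ?q (lower a i k)"
    using a by (simp add: rot_field_def)
  also have "\<dots> = (sqrt (real (a i k) * real (a i 0 + 1)) * ?pc (l i) (mi_lower (a i) k)
      - sqrt (real (a i 0) * real (a i k + 1)) * ?pc (l i) (mi_raise (a i) k)) * PR a"
    unfolding raise lower by (simp add: algebra_simps)
  finally have rot: "rot_field i k ?q a = \<dots>" .
  have curve: "segre_point r n d \<sigma> (l(i := rotate_coords k s (l i))) a =
      ?pc (rotate_coords k s (l i)) (a i) * PR a" for s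
    unfolding segre_point_split[OF i a] PR_def by (auto intro!: prod.cong)
  show ?thesis unfolding curve rot by (intro DERIV_cmult_right power_coord_rotate_deriv[OF k])
qed

lemma rot_field_tangent:
  assumes q: "q \<in> SV r n d" and i: "i \<in> {1..r}" and k: "k \<in> {1..n i}"
  shows "rot_field i k q \<in> tangent r n d q"
proof -
  obtain \<sigma> l where ok: "segre_params r n d \<sigma> l" and qe: "q = segre_point r n d \<sigma> l"
    using SV_imp_segre_point[OF q] .
  define \<gamma> where "\<gamma> s = segre_point r n d \<sigma> (l(i := rotate_coords k s (l i)))" for s
  have "curve_deriv r n d \<gamma> (rot_field i k q)"
    unfolding curve_deriv_def
  proof (intro conjI ballI)
    show "hvec r n d (rot_field i k q)" by (simp add: hvec_def rot_field_def)
    fix a assume "a \<in> T"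
    then show "((\<lambda>t. \<gamma> t a) has_real_derivative rot_field i k q a) (at 0)"
      unfolding \<gamma>_def qe by (rule rot_field_segre_point_deriv[OF i k])
  qed
  moreover have "\<gamma> 0 = q" unfolding \<gamma>_def qe using k by (simp add: rotate_coords_0)
  moreover have "segre_params r n d \<sigma> (l(i := rotate_coords k s (l i)))" for s
    using ok rotate_coords_norm[OF k, of s "l i"] unfolding segre_params_def by auto
  then have "\<forall>\<^sub>F t in nhds 0. \<gamma> t \<in> SV r n d" unfolding \<gamma>_def by (simp add: segre_point_in_SV)
  ultimately show ?thesis unfolding tangent_def by blast
qed

lemma tangent_scale:
  assumes "u \<in> tangent r n d q"
  shows "(\<lambda>a. c * u a) \<in> tangent r n d q"
proof -
  obtain \<gamma> where g0: "\<gamma> 0 = q" and gs: "\<forall>\<^sub>F t in nhds 0. \<gamma> t \<in> SV r n d"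
    and cd: "curve_deriv r n d \<gamma> u"
    using assms by (rule tangent_curveE)
  define \<gamma>' where "\<gamma>' t = \<gamma> (c * t)" for t
  have "\<forall>\<^sub>F t in nhds 0. \<gamma>' t \<in> SV r n d"
  proof -
    have "((\<lambda>t. c * t) \<longlongrightarrow> c * 0) (nhds 0)"
      by (intro tendsto_mult_left filterlim_ident)
    then have "filterlim (\<lambda>t. c * t) (nhds 0) (nhds 0)" by simp
    from eventually_compose_filterlim[OF gs this] show ?thesis unfolding \<gamma>'_def .
  qed
  moreover have "curve_deriv r n d \<gamma>' (\<lambda>a. c * u a)"
    unfolding curve_deriv_def \<gamma>'_def
  proof (intro conjI ballI)
    show "hvec r n d (\<lambda>a. c * u a)" using cd by (simp add: curve_deriv_def hvec_def)
    fix a assume a: "a \<in> T"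
    have g': "((\<lambda>t. c * t) has_real_derivative c) (at 0)" by (auto intro!: derivative_eq_intros)
    have f': "((\<lambda>t. \<gamma> t a) has_real_derivative u a) (at ((\<lambda>t. c * t) 0))"
      using curve_deriv_coord[OF cd a] by simp
    from DERIV_chain2[OF f' g'] show "((\<lambda>t. \<gamma> (c * t) a) has_real_derivative c * u a) (at 0)"
      by (simp add: mult.commute)
  qed
  ultimately show ?thesis unfolding tangent_def mem_Collect_eq
    by (intro exI[of _ \<gamma>']) (simp add: \<gamma>'_def g0)
qed

lemma rot_field_E:
  assumes i: "i \<in> {1..r}" and k: "k \<in> {1..n i}"
  shows "rot_field i k E = (\<lambda>a. if a = idx1 i k then sqrt (real (d i)) else 0)"
proof
  fix a
  show "rot_field i k E a = (if a = idx1 i k then sqrt (real (d i)) else 0)"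
  proof (cases "a \<in> T")
    case False then show ?thesis using idx1_in_T[OF i k] by (auto simp: rot_field_def)
  next
    case True
    have u: "E (raise a i k) = 0" using raise_ne_idx0[OF i k] by (simp add: Epoint_eq)
    show ?thesis
    proof (cases "a = idx1 i k")
      case True
      have "lower (idx1 i k) i k = idx0" using k i nd[OF i]
        by (auto simp: lower_def idx1_def mi_lower_def mi1_def idx0_def mi0_def fun_eq_iff)
      moreover have "idx1 i k i k = 1" "idx1 i k i 0 + 1 = d i"
        using k i nd[OF i] by (auto simp: idx1_def mi1_def)
      ultimately show ?thesis using True \<open>a \<in> T\<close> u by (simp add: rot_field_def Epoint_eq)
    next
      case False
      have "sqrt (real (a i k) * real (a i 0 + 1)) * E (lower a i k) = 0"
      proof (cases "a i k = 0")
        case False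
        then have "lower a i k \<noteq> idx0" using lower_eq_idx0[OF \<open>a \<in> T\<close> i k] \<open>a \<noteq> idx1 i k\<close> by auto
        then show ?thesis by (simp add: Epoint_eq)
      qed simp
      then show ?thesis using False \<open>a \<in> T\<close> u by (simp add: rot_field_def)
    qed
  qed
qed

lemma idx1_delta_tangent:
  assumes i: "i \<in> {1..r}" and k: "k \<in> {1..n i}"
  shows "(\<lambda>a. if a = idx1 i k then 1 else 0) \<in> tangent r n d E"
proof -
  have "(\<lambda>a. (1 / sqrt (real (d i))) * rot_field i k E a) \<in> tangent r n d E"
    by (rule tangent_scale[OF rot_field_tangent[OF Epoint_in_SV i k]])
  moreover have "(\<lambda>a. (1 / sqrt (real (d i))) * rot_field i k E a) =
      (\<lambda>a. if a = idx1 i k then 1 else 0)"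
    using nd[OF i] by (auto simp: rot_field_E[OF i k])
  ultimately show ?thesis by simp
qed

definition circle_curve :: "(nat \<Rightarrow> real) \<Rightarrow> (nat \<Rightarrow> nat \<Rightarrow> real) \<Rightarrow> real \<Rightarrow> tvec" where
  "circle_curve \<rho> u s = segre_point r n d (\<lambda>_. 1) (\<lambda>j. circle_form (\<rho> j) (u j) s)"

lemma circle_curve_0: "circle_curve \<rho> u 0 = E"
  unfolding circle_curve_def circle_form_0 Epoint_segre_point ..

lemma circle_curve_differentiable:
  assumes "a \<in> T"
  shows "\<exists>D. ((\<lambda>s. circle_curve \<rho> u s a) has_real_derivative D) (at 0)"
  unfolding circle_curve_def segre_point_apply power_coord_def mpow_def if_P[OF assms]
  by (rule exI, rule has_field_derivative_prod, rule DERIV_cmult, rule has_field_derivative_prod,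
      rule DERIV_power, rule circle_form_deriv)

lemma circle_curve_deriv_idx1:
  assumes i: "i \<in> {1..r}" and k: "k \<in> {1..n i}"
  shows "((\<lambda>s. circle_curve \<rho> u s (idx1 i k)) has_real_derivative sqrt (d i) * u i k * \<rho> i) (at 0)"
proof -
  have d1: "1 \<le> d i" using nd[OF i] by simp
  define P where "P s = (\<Prod>j\<in>{1..r}-{i}. cos (\<rho> j * s) ^ d j)" for s
  have "circle_curve \<rho> u s (idx1 i k) =
      power_coord (n i) (d i) 1 (circle_form (\<rho> i) (u i) s) (mi1 (d i) k) *
      (\<Prod>j\<in>{1..r}-{i}. power_coord (n j) (d j) 1 (circle_form (\<rho> j) (u j) s) (mi0 (d j)))" for s
    unfolding circle_curve_def segre_point_split[OF i idx1_in_T[OF i k]]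
    by (auto simp: idx1_def idx0_def intro!: prod.cong)
  also have "\<dots> s = sqrt (real (d i)) * u i k * (cos (\<rho> i * s) ^ (d i - 1) * sin (\<rho> i * s) * P s)"
    for s
    using k d1 unfolding P_def
    by (simp add: power_coord_def multinom_mi0 multinom_mi1 mpow_mi0 mpow_mi1 circle_form_def
        mult_ac cong: prod.cong)
  finally have curve: "circle_curve \<rho> u s (idx1 i k) = \<dots> s" for s .
  have "\<exists>P'. (P has_real_derivative P') (at 0)"
    unfolding P_def by (rule exI, (rule has_field_derivative_prod | rule derivative_intros)+)
  moreover have "P 0 = 1" unfolding P_def by simp
  ultimately show ?thesis unfolding curve by (auto intro!: derivative_eq_intros simp: algebra_simps)
qed

lemma circle_curve_tangent:
  assumes norm: "\<forall>j s. (\<Sum>k\<le>n j. (circle_form (\<rho> j) (u j) s k)\<^sup>2) = 1"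
  obtains D where "D \<in> tangent r n d E"
    and "\<And>i k. i \<in> {1..r} \<Longrightarrow> k \<in> {1..n i} \<Longrightarrow> D (idx1 i k) = sqrt (d i) * u i k * \<rho> i"
proof -
  define D where "D a = (if a \<in> T
      then (SOME D. ((\<lambda>s. circle_curve \<rho> u s a) has_real_derivative D) (at 0)) else 0)" for a
  have cd: "curve_deriv r n d (circle_curve \<rho> u) D"
    unfolding curve_deriv_def
  proof (intro conjI ballI)
    show "hvec r n d D" by (simp add: hvec_def D_def)
    fix a assume a: "a \<in> T"
    show "((\<lambda>t. circle_curve \<rho> u t a) has_real_derivative D a) (at 0)"
      unfolding D_def using a someI_ex[OF circle_curve_differentiable[OF a]] by simp
  qed
  have "circle_curve \<rho> u s \<in> SV r n d" for s
    unfolding circle_curve_def by (rule segre_point_in_SV) (simp add: segre_params_def norm)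
  then have "\<forall>\<^sub>F s in nhds 0. circle_curve \<rho> u s \<in> SV r n d" by simp
  then have "D \<in> tangent r n d E"
    unfolding tangent_def by (intro CollectI exI[of _ "circle_curve \<rho> u"] conjI circle_curve_0 cd)
  moreover have "D (idx1 i k) = sqrt (d i) * u i k * \<rho> i" if ik: "i \<in> {1..r}" "k \<in> {1..n i}" for i k
    using curve_deriv_coord[OF cd idx1_in_T[OF ik]] circle_curve_deriv_idx1[OF ik]
    by (rule DERIV_unique)
  ultimately show thesis by (rule that)
qed

lemma idx1_span_tangent:
  "(\<lambda>a. \<Sum>j\<in>{1..r}. \<Sum>m\<in>{1..n j}. c j m * (if a = idx1 j m then 1 else 0)) \<in> tangent r n d E"
proof -
  have d_pos: "\<And>j. j \<in> {1..r} \<Longrightarrow> 1 \<le> d j" using nd by blast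
  obtain \<rho> u where norm: "\<forall>j s. (\<Sum>k\<le>n j. (circle_form (\<rho> j) (u j) s k)\<^sup>2) = 1"
    and vel: "\<forall>j\<in>{1..r}. \<forall>k\<in>{1..n j}. sqrt (d j) * u j k * \<rho> j = c j k"
    using circle_params[where J="{1..r}" and dd=d and m=n and c=c, OF d_pos] by blast
  obtain D where DT: "D \<in> tangent r n d E"
    and D: "\<And>i k. i \<in> {1..r} \<Longrightarrow> k \<in> {1..n i} \<Longrightarrow> D (idx1 i k) = c i k"
    using circle_curve_tangent[OF norm] vel by metis
  have "D a = (\<Sum>j\<in>{1..r}. \<Sum>m\<in>{1..n j}. c j m * (if a = idx1 j m then 1 else 0))" for a
  proof (cases "a \<in> idx1_set")
    case True
    then obtain i k where ik: "i \<in> {1..r}" "k \<in> {1..n i}" "a = idx1 i k"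
      unfolding idx1_set_def by blast
    have "(\<Sum>j\<in>{1..r}. \<Sum>m\<in>{1..n j}. c j m * (if a = idx1 j m then 1 else 0)) = c i k"
      unfolding ik(3) by (rule sum_idx1_delta[OF ik(1,2)]) (auto simp: idx1_eq_iff[OF ik(1,2)])
    then show ?thesis using D[OF ik(1,2)] ik(3) by simp
  next
    case False
    then have "\<And>j m. j \<in> {1..r} \<Longrightarrow> m \<in> {1..n j} \<Longrightarrow> a \<noteq> idx1 j m" unfolding idx1_set_def by blast
    then show ?thesis using tangent_E_support[OF DT False] by simp
  qed
  then have "D = (\<lambda>a. \<Sum>j\<in>{1..r}. \<Sum>m\<in>{1..n j}. c j m * (if a = idx1 j m then 1 else 0))" ..
  then show ?thesis using DT by simp
qed

lemma ip_sum: "finite X \<Longrightarrow> ip r n d D (\<lambda>a. \<Sum>x\<in>X. h x a) = (\<Sum>x\<in>X. ip r n d D (h x))"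
  unfolding ip_def by (simp add: sum_distrib_left sum.swap[of _ T])

lemma ip_scaled_delta: "x \<in> T \<Longrightarrow> ip r n d D (\<lambda>a. c * (if a = x then 1 else 0)) = c * D x"
proof -
  assume x: "x \<in> T"
  have "ip r n d D (\<lambda>a. c * (if a = x then 1 else 0)) = c * ip r n d D (\<lambda>a. if a = x then 1 else 0)"
    unfolding ip_def by (simp add: sum_distrib_left mult_ac)
  then show ?thesis using ip_delta_right[OF x] by simp
qed

lemma ip_add: "ip r n d D (\<lambda>a. u a + v a) = ip r n d D u + ip r n d D v"
  unfolding ip_def by (simp add: distrib_left sum.distrib)

lemma idx2_in_T: "i \<in> {1..r} \<Longrightarrow> 2 \<le> d i \<Longrightarrow> k \<in> {1..n i} \<Longrightarrow> l \<in> {1..n i} \<Longrightarrow> idx2 i k l \<in> T"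
  unfolding idx2_def using idx0_in_T by (auto simp: tidx_def mi2_MI)

lemma idx11_in_T: "i \<in> {1..r} \<Longrightarrow> j \<in> {1..r} \<Longrightarrow> k \<in> {1..n i} \<Longrightarrow> l \<in> {1..n j} \<Longrightarrow> idx11 i j k l \<in> T"
  unfolding idx11_def using idx0_in_T nd by (auto simp: tidx_def mi1_MI)

lemma eq_idx0_upd_iff:
  assumes a: "a \<in> T" and i: "i \<in> {1..r}"
  shows "a = idx0(i := \<mu>) \<longleftrightarrow> a i = \<mu> \<and> (\<forall>j\<in>{1..r}-{i}. a j = mi0 (d j))"
  using a i by (auto simp: idx0_def tidx_def fun_eq_iff)

lemma tensor_single_factor:
  assumes i: "i \<in> {1..r}" and a: "a \<in> T"
  shows "tensor r n d (\<lambda>j. if j = i then h else mono (mi0 (d j))) a =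
    bw (n i) (d i) h (a i) * (if a = idx0(i := a i) then 1 else 0)"
proof -
  have "(\<Prod>j\<in>{1..r}-{i}. bw (n j) (d j) (if j = i then h else mono (mi0 (d j))) (a j)) =
      (\<Prod>j\<in>{1..r}-{i}. if a j = mi0 (d j) then 1 else 0)"
    using a by (intro prod.cong) (auto simp: tidx_def bw_mono_mi0)
  also have "\<dots> = (if \<forall>j\<in>{1..r}-{i}. a j = mi0 (d j) then 1 else 0)" by (rule prod_indicator) simp
  also have "\<dots> = (if a = idx0(i := a i) then 1 else 0)" using eq_idx0_upd_iff[OF a i] by simp
  finally show ?thesis unfolding tensor_split[OF i] using a by simp
qed

lemma Wcomp_eq:
  assumes i: "i \<in> {1..r}" and dd: "2 \<le> d i"
  shows "Wcomp r n d f i = (\<lambda>a.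
    (\<Sum>k\<in>{1..n i}. \<Sum>l\<in>{k<..n i}. f i k l * (if a = idx2 i k l then 1 else 0))
      + (\<Sum>k\<in>{1..n i}. f i k k * (if a = idx2 i k k then 1 else 0)))"
proof
  fix a
  show "Wcomp r n d f i a =
    (\<Sum>k\<in>{1..n i}. \<Sum>l\<in>{k<..n i}. f i k l * (if a = idx2 i k l then 1 else 0))
      + (\<Sum>k\<in>{1..n i}. f i k k * (if a = idx2 i k k then 1 else 0))"
  proof (cases "a \<in> T")
    case False
    have "a \<noteq> idx2 i k l" if "k \<in> {1..n i}" "l \<in> {1..n i}" for k l
      using idx2_in_T[OF i dd that] False by auto
    then show ?thesis using False by (auto simp: Wcomp_def tensor_def intro!: sum.neutral)
  next
    case True
    have MI: "a i \<in> MI (n i) (d i)" using True i by (simp add: tidx_def)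
    have e: "(a = idx2 i k l) \<longleftrightarrow> (a i = mi2 (d i) k l \<and> a = idx0(i := a i))" for k l
      unfolding idx2_def by auto
    show ?thesis unfolding Wcomp_def tensor_single_factor[OF i True] bw_Wfac[OF dd] e
      by (simp add: sum_distrib_right distrib_right mult_ac if_distrib cong: if_cong)
  qed
qed

lemma Wcomp_deg1:
  assumes i: "i \<in> {1..r}" and dd: "d i = 1"
  shows "Wcomp r n d f i = (\<lambda>_. 0)"
proof
  fix a show "Wcomp r n d f i a = 0"
  proof (cases "a \<in> T")
    case True
    have "Wfac (n i) (d i) (f i) = (\<lambda>_. 0)" unfolding Wfac_def using dd by simp
    then have "bw (n i) (d i) (Wfac (n i) (d i) (f i)) (a i) = 0" by (simp add: bw_def)
    then show ?thesis unfolding Wcomp_def tensor_single_factor[OF i True] by simp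
  qed (simp add: Wcomp_def tensor_def)
qed

lemma Gcomp_eq:
  assumes i: "i \<in> {1..r}" and j: "j \<in> {1..r}" and ij: "i < j"
  shows "Gcomp r n d g i j =
    (\<lambda>a. \<Sum>k\<in>{1..n i}. \<Sum>l\<in>{1..n j}. g i j k l * (if a = idx11 i j k l then 1 else 0))"
  unfolding Gcomp_def using Ebas_eq[OF i j] ij by (auto intro!: ext sum.cong)

lemma positive_entry_ne_idx0: "i \<in> {1..r} \<Longrightarrow> k \<in> {1..n i} \<Longrightarrow> 1 \<le> a i k \<Longrightarrow> a \<noteq> idx0"
  by (auto simp: idx0_def mi0_def)

lemma field_deriv_idx2:
  assumes fd: "field_deriv v w \<gamma> V D" and i: "i \<in> {1..r}" and dd: "2 \<le> d i"
    and k: "k \<in> {1..n i}" and l: "l \<in> {1..n i}" and kl: "k < l"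
  shows "D (idx2 i k l) = sqrt ((real (d i) - 1) / real (d i)) *
    (v (idx1 i l) * w (idx1 i k) + w (idx1 i l) * v (idx1 i k))"
proof -
  have k0: "k \<noteq> 0" "l \<noteq> 0" using k l by auto
  have p: "idx2 i k l i k = 1" using kl k0 by (simp add: idx2_def mi2_def)
  have "lower (idx2 i k l) i k = idx1 i l"
    using kl k0 dd
    by (auto simp: lower_def idx2_def idx1_def mi_lower_def mi2_def mi1_def fun_eq_iff)
  moreover have "lower_coeff (idx2 i k l) i k = sqrt ((real (d i) - 1) / real (d i))"
    using k0 dd kl by (simp add: lower_coeff_def p idx2_def mi2_def of_nat_diff)
  ultimately show ?thesis
    using field_deriv_formula[OF fd idx2_in_T[OF i dd k l] positive_entry_ne_idx0[OF i k] i k]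
      p idx1_ne_idx0[OF i l] by simp
qed

lemma field_deriv_idx2_diag:
  assumes fd: "field_deriv v w \<gamma> V D" and i: "i \<in> {1..r}" and dd: "2 \<le> d i" and k: "k \<in> {1..n i}"
  shows "D (idx2 i k k) = sqrt ((real (d i) - 1) / (2 * real (d i))) *
    (v (idx1 i k) * w (idx1 i k) + w (idx1 i k) * v (idx1 i k))"
proof -
  have k0: "k \<noteq> 0" using k by auto
  have p: "idx2 i k k i k = 2" using k0 by (simp add: idx2_def mi2_def)
  have "lower (idx2 i k k) i k = idx1 i k"
    using k0 dd by (auto simp: lower_def idx2_def idx1_def mi_lower_def mi2_def mi1_def fun_eq_iff)
  moreover have "lower_coeff (idx2 i k k) i k = sqrt ((real (d i) - 1) / (2 * real (d i)))"
    using k0 dd by (simp add: lower_coeff_def p idx2_def mi2_def of_nat_diff)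
  ultimately show ?thesis
    using field_deriv_formula[OF fd idx2_in_T[OF i dd k k] positive_entry_ne_idx0[OF i k] i k]
      p idx1_ne_idx0[OF i k] by simp
qed

lemma field_deriv_idx11:
  assumes fd: "field_deriv v w \<gamma> V D" and i: "i \<in> {1..r}" and j: "j \<in> {1..r}" and ij: "i \<noteq> j"
    and k: "k \<in> {1..n i}" and l: "l \<in> {1..n j}"
  shows "D (idx11 i j k l) = v (idx1 j l) * w (idx1 i k) + w (idx1 j l) * v (idx1 i k)"
proof -
  have k0: "k \<noteq> 0" "l \<noteq> 0" using k l by auto
  have di: "1 \<le> d i" using nd[OF i] by simp
  have p: "idx11 i j k l i k = 1" using ij k0 by (simp add: idx11_def mi1_def)
  have "lower (idx11 i j k l) i k = idx1 j l"
    using ij k0 i di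
    by (auto simp: lower_def idx11_def idx1_def mi_lower_def mi1_def idx0_def mi0_def fun_eq_iff)
  moreover have "lower_coeff (idx11 i j k l) i k = 1"
    using ij k0 di by (simp add: lower_coeff_def p idx11_def mi1_def)
  ultimately show ?thesis
    using field_deriv_formula[OF fd idx11_in_T[OF i j k l] positive_entry_ne_idx0[OF i k] i k]
      p idx1_ne_idx0[OF j l] by simp
qed

lemma lower_eq_idx1_imp_WG:
  assumes a: "a \<in> T" and i: "i \<in> {1..r}" and k: "k \<in> {1..n i}" and j: "j \<in> {1..r}"
    and l: "l \<in> {1..n j}" and low: "lower a i k = idx1 j l"
  shows "(j = i \<longrightarrow> a \<in> Windex r n d i) \<and> (j \<noteq> i \<longrightarrow> a \<in> Gindex r n d i j)"
proof -
  have other: "a m = idx1 j l m" if "m \<noteq> i" for m using low that by (metis lower_def fun_upd_other)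
  have ai: "mi_lower (a i) k = idx1 j l i" using low by (metis lower_def fun_upd_same)
  have ai0: "a i 0 + 1 = idx1 j l i 0" using fun_cong[OF ai, of 0] k by (simp add: mi_lower_def)
  have d1: "1 \<le> d j" "1 \<le> d i" using nd j i by auto
  have oth: "a m 0 = d m" if "m \<in> {1..r}" "m \<noteq> i" "m \<noteq> j" for m
    using other[of m] that by (simp add: idx1_def idx0_def mi0_def)
  show ?thesis
  proof (intro conjI impI)
    assume "j = i"
    then show "a \<in> Windex r n d i"
      unfolding Windex_def
      using a ai0 d1 oth other l by (auto simp: idx1_def mi1_def idx0_def mi0_def)
  next
    assume ji: "j \<noteq> i"
    have "a i 0 + 1 = d i" using ai0 ji i by (simp add: idx1_def idx0_def mi0_def)
    moreover have "a j 0 + 1 = d j" using other[of j] ji d1 l by (simp add: idx1_def mi1_def)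
    ultimately show "a \<in> Gindex r n d i j" unfolding Gindex_def using a oth by auto
  qed
qed

lemma Pspace_zero_WG:
  assumes P: "P \<in> Pspace r n d" and a: "a \<in> T" and i: "i \<in> {1..r}" and j: "j \<in> {1..r}"
    and WG: "(j = i \<longrightarrow> a \<in> Windex r n d i) \<and> (j \<noteq> i \<longrightarrow> a \<in> Gindex r n d i j)"
  shows "P a = 0"
proof -
  have "(\<exists>i\<in>{1..r}. a \<in> Windex r n d i) \<or> (\<exists>i\<in>{1..r}. \<exists>j\<in>{i<..r}. a \<in> Gindex r n d i j)"
  proof (cases "j = i")
    case False
    then have "a \<in> Gindex r n d i j" "a \<in> Gindex r n d j i" using WG by (auto simp: Gindex_def)
    then show ?thesis using i j False by (cases "i < j") auto
  qed (use WG i in auto)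
  then have "ip r n d P (bvec a) = 0" using P unfolding Pspace_def by blast
  then show ?thesis unfolding bvec_def ip_delta_right[OF a] .
qed

lemma Pspace_zero_idx0_idx1:
  assumes P: "P \<in> Pspace r n d" and a: "a = idx0 \<or> a \<in> idx1_set"
  shows "P a = 0"
proof -
  have E: "ip r n d P E = 0" and tan: "\<And>v. v \<in> tangent r n d E \<Longrightarrow> ip r n d P v = 0"
    using P by (auto simp: Pspace_def normal_def)
  show ?thesis
  proof (cases "a = idx0")
    case True
    then show ?thesis using E unfolding Epoint_eq ip_delta_right[OF idx0_in_T] by simp
  next
    case False
    then obtain i k where ik: "i \<in> {1..r}" "k \<in> {1..n i}" and "a = idx1 i k"
      using a unfolding idx1_set_def by blast
    then show ?thesis
      using tan[OF idx1_delta_tangent[OF ik]] unfolding ip_delta_right[OF idx1_in_T[OF ik]] by simp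
  qed
qed

text \<open>By \<open>field_deriv_formula\<close>, \<open>D\<close> only sees the indices of \<open>E\<close>, \<open>T\<^sub>E\<close>, \<open>W\<close> and \<open>G\<close>, all of which
  \<open>P\<close> is orthogonal to.\<close>

lemma ip_field_deriv_Pspace:
  assumes fd: "field_deriv v w \<gamma> V D" and P: "P \<in> Pspace r n d"
  shows "ip r n d D P = 0"
  unfolding ip_def
proof (rule sum.neutral, rule ballI)
  fix a assume a: "a \<in> T"
  have v: "v \<in> tangent r n d E" and w: "w \<in> tangent r n d E"
    using fd by (auto simp: field_deriv_def)
  show "D a * P a = 0"
  proof (cases "a = idx0 \<or> a \<in> idx1_set")
    case True then show ?thesis using Pspace_zero_idx0_idx1[OF P] by simp
  next
    case False
    then obtain i k where ik: "i \<in> {1..r}" "k \<in> {1..n i}" "1 \<le> a i k" and b: "lower a i k \<noteq> idx0"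
      using exists_lowerable_entry[OF a] by blast
    have bT: "lower a i k \<in> T" by (rule lower_in_T[OF a ik])
    show ?thesis
    proof (cases "lower a i k \<in> idx1_set")
      case True
      then obtain j l where jl: "j \<in> {1..r}" "l \<in> {1..n j}" "lower a i k = idx1 j l"
        unfolding idx1_set_def by blast
      then show ?thesis
        using Pspace_zero_WG[OF P a ik(1) jl(1) lower_eq_idx1_imp_WG[OF a ik(1,2) jl]] by simp
    next
      case False
      then obtain i' k' where "i' \<in> {1..r}" "k' \<in> {1..n i'}" "1 \<le> lower a i k i' k'"
        "lower (lower a i k) i' k' \<noteq> idx0"
        using exists_lowerable_entry[OF bT b] by blast
      then have "v (lower a i k) = 0" "w (lower a i k) = 0"
        using tangent_E_lowerable[OF _ bT b] v w by blast+
      then show ?thesis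
        using field_deriv_formula[OF fd a _ ik b] False \<open>\<not> (a = idx0 \<or> a \<in> idx1_set)\<close>
        by simp
    qed
  qed
qed

definition second_form ::
    "(nat \<Rightarrow> nat \<Rightarrow> nat \<Rightarrow> real) \<Rightarrow> (nat \<Rightarrow> nat \<Rightarrow> nat \<Rightarrow> nat \<Rightarrow> real) \<Rightarrow> tvec \<Rightarrow> tvec \<Rightarrow> real" where
  "second_form f g v w = (\<Sum>i\<in>{1..r}. \<Sum>k\<in>{1..n i}. \<Sum>j\<in>{1..r}. \<Sum>l\<in>{1..n j}.
     v (idx1 i k) * Lmat d f g i k j l * w (idx1 j l))"

lemma SV_hvec: "q \<in> SV r n d \<Longrightarrow> hvec r n d q"
proof -
  assume "q \<in> SV r n d"
  then obtain \<sigma> l where "q = segre_point r n d \<sigma> l" using SV_imp_segre_point by blast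
  then show ?thesis by (simp add: hvec_def segre_point_apply)
qed

lemma curve_coord_deriv:
  assumes g0: "\<gamma> 0 = E" and gs: "\<forall>\<^sub>F t in nhds 0. \<gamma> t \<in> SV r n d" and cd: "curve_deriv r n d \<gamma> w"
  shows "((\<lambda>t. \<gamma> t x) has_real_derivative w x) (at 0)"
proof (cases "x \<in> T")
  case True then show ?thesis by (rule curve_deriv_coord[OF cd])
next
  case False
  have w0: "w x = 0" using cd False by (simp add: curve_deriv_def hvec_def)
  have ev: "\<forall>\<^sub>F t in nhds 0. \<gamma> t x = 0"
    using gs by (rule eventually_mono) (use False SV_hvec in \<open>auto simp: hvec_def\<close>)
  have "((\<lambda>t. \<gamma> t x) has_real_derivative 0) (at 0) \<longleftrightarrow> ((\<lambda>_. 0::real) has_real_derivative 0) (at 0)"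
    by (rule DERIV_cong_ev[OF refl ev refl])
  then show ?thesis using w0 by simp
qed

lemma field_deriv_exists:
  assumes i: "i \<in> {1..r}" and k: "k \<in> {1..n i}" and w: "w \<in> tangent r n d E"
  shows "\<exists>\<gamma> V D. field_deriv (\<lambda>a. if a = idx1 i k then 1 else 0) w \<gamma> V D"
proof -
  obtain \<gamma> where g0: "\<gamma> 0 = E" and gs: "\<forall>\<^sub>F t in nhds 0. \<gamma> t \<in> SV r n d"
    and cd: "curve_deriv r n d \<gamma> w"
    using w by (rule tangent_curveE)
  define V where "V q = (\<lambda>a. (1 / sqrt (real (d i))) * rot_field i k q a)" for q
  define c1 where "c1 a = sqrt (real (a i 0) * real (a i k + 1))" for a :: "nat \<Rightarrow> nat \<Rightarrow> nat"
  define c2 where "c2 a = sqrt (real (a i k) * real (a i 0 + 1))" for a :: "nat \<Rightarrow> nat \<Rightarrow> nat"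
  define D where "D a = (if a \<in> T then
      (1 / sqrt (real (d i))) * (- c1 a * w (raise a i k) + c2 a * w (lower a i k)) else 0)" for a
  have dpos: "sqrt (real (d i)) > 0" using nd[OF i] by simp
  have V0: "V E = (\<lambda>a. if a = idx1 i k then 1 else 0)"
    unfolding V_def rot_field_E[OF i k] using dpos by (auto intro!: ext)
  have Vt: "\<forall>\<^sub>F t in nhds 0. V (\<gamma> t) \<in> tangent r n d (\<gamma> t)"
    using gs
    by (rule eventually_mono) (unfold V_def, rule tangent_scale, rule rot_field_tangent[OF _ i k])
  have cdD: "curve_deriv r n d (\<lambda>t. V (\<gamma> t)) D"
    unfolding curve_deriv_def
  proof (intro conjI ballI)
    show "hvec r n d D" by (simp add: hvec_def D_def)
    fix a assume a: "a \<in> T"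
    have "V (\<gamma> t) a =
        (1 / sqrt (real (d i))) * (- c1 a * \<gamma> t (raise a i k) + c2 a * \<gamma> t (lower a i k))"
      for t
      using a by (simp add: V_def rot_field_def c1_def c2_def)
    moreover have "((\<lambda>t. (1 / sqrt (real (d i))) *
        (- c1 a * \<gamma> t (raise a i k) + c2 a * \<gamma> t (lower a i k))) has_real_derivative D a) (at 0)"
      unfolding D_def
      using a by (simp only: if_True) (intro DERIV_cmult DERIV_add curve_coord_deriv[OF g0 gs cd])
    ultimately show "((\<lambda>t. V (\<gamma> t) a) has_real_derivative D a) (at 0)" by simp
  qed
  have "field_deriv (\<lambda>a. if a = idx1 i k then 1 else 0) w \<gamma> V D"
    unfolding field_deriv_def using w idx1_delta_tangent[OF i k] g0 gs cd V0 Vt cdD by simp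
  then show ?thesis by blast
qed

definition W_pairing :: "(nat \<Rightarrow> nat \<Rightarrow> nat \<Rightarrow> real) \<Rightarrow> tvec \<Rightarrow> tvec \<Rightarrow> nat \<Rightarrow> real" where
  "W_pairing f v w i = (if 2 \<le> d i then
      (\<Sum>k\<in>{1..n i}. \<Sum>l\<in>{k<..n i}. f i k l * (sqrt ((real (d i) - 1) / real (d i)) *
        (v (idx1 i l) * w (idx1 i k) + w (idx1 i l) * v (idx1 i k))))
      + (\<Sum>k\<in>{1..n i}. f i k k * (sqrt ((real (d i) - 1) / (2 * real (d i))) *
        (v (idx1 i k) * w (idx1 i k) + w (idx1 i k) * v (idx1 i k))))
      else 0)"

definition G_pairing :: "(nat \<Rightarrow> nat \<Rightarrow> nat \<Rightarrow> nat \<Rightarrow> real) \<Rightarrow> tvec \<Rightarrow> tvec \<Rightarrow> nat \<Rightarrow> nat \<Rightarrow> real" where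
  "G_pairing g v w i j = (\<Sum>k\<in>{1..n i}. \<Sum>l\<in>{1..n j}.
     g i j k l * (v (idx1 j l) * w (idx1 i k) + w (idx1 j l) * v (idx1 i k)))"

lemma ip_field_deriv_Wcomp:
  assumes fd: "field_deriv v w \<gamma> V D" and i: "i \<in> {1..r}"
  shows "ip r n d D (Wcomp r n d f i) = W_pairing f v w i"
proof (cases "2 \<le> d i")
  case True
  have "ip r n d D (Wcomp r n d f i) = (\<Sum>k\<in>{1..n i}. \<Sum>l\<in>{k<..n i}. f i k l * D (idx2 i k l))
      + (\<Sum>k\<in>{1..n i}. f i k k * D (idx2 i k k))"
    unfolding Wcomp_eq[OF i True] ip_add ip_sum[OF finite_atLeastAtMost]
      ip_sum[OF finite_greaterThanAtMost]
    using idx2_in_T[OF i True] by (auto intro!: sum.cong simp: ip_scaled_delta)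
  also have "\<dots> = W_pairing f v w i"
    unfolding W_pairing_def
    using True field_deriv_idx2[OF fd i True] field_deriv_idx2_diag[OF fd i True]
    by (auto intro!: sum.cong arg_cong2[where f="(+)"])
  finally show ?thesis .
next
  case False
  then have "d i = 1" using nd[OF i] by simp
  then show ?thesis using False Wcomp_deg1[OF i] by (simp add: ip_def W_pairing_def)
qed

lemma ip_field_deriv_Gcomp:
  assumes fd: "field_deriv v w \<gamma> V D" and i: "i \<in> {1..r}" and j: "j \<in> {1..r}" and ij: "i < j"
  shows "ip r n d D (Gcomp r n d g i j) = G_pairing g v w i j"
  unfolding Gcomp_eq[OF i j ij] ip_sum[OF finite_atLeastAtMost] G_pairing_def
  using idx11_in_T[OF i j] field_deriv_idx11[OF fd i j] ij
  by (auto intro!: sum.cong simp: ip_scaled_delta)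

definition second_form_block ::
    "(nat \<Rightarrow> nat \<Rightarrow> nat \<Rightarrow> real) \<Rightarrow> (nat \<Rightarrow> nat \<Rightarrow> nat \<Rightarrow> nat \<Rightarrow> real) \<Rightarrow> tvec \<Rightarrow> tvec \<Rightarrow>
      nat \<Rightarrow> nat \<Rightarrow> real" where
  "second_form_block f g v w i j =
     (\<Sum>k\<in>{1..n i}. \<Sum>l\<in>{1..n j}. v (idx1 i k) * Lmat d f g i k j l * w (idx1 j l))"

lemma second_form_block_diag:
  assumes sym: "\<forall>i k l. f i k l = f i l k" and i: "i \<in> {1..r}"
  shows "second_form_block f g v w i i = W_pairing f v w i"
proof (cases "2 \<le> d i")
  case False
  then have "d i = 1" using nd[OF i] by simp
  then show ?thesis using False by (simp add: second_form_block_def W_pairing_def Lmat_def)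
next
  case True
  define s where "s = sqrt ((real (d i) - 1) / real (d i))"
  define B where "B k l = s * (if k = l then sqrt 2 else 1) * f i k l" for k l
  have "second_form_block f g v w i i =
      (\<Sum>k\<in>{1..n i}. \<Sum>l\<in>{1..n i}. v (idx1 i k) * B k l * w (idx1 i l))"
    by (simp add: second_form_block_def Lmat_def B_def s_def)
  also have "\<dots> = (\<Sum>k\<in>{1..n i}. B k k * (v (idx1 i k) * w (idx1 i k))) +
      (\<Sum>k\<in>{1..n i}. \<Sum>l\<in>{k<..n i}.
        B k l * (v (idx1 i l) * w (idx1 i k) + w (idx1 i l) * v (idx1 i k)))"
    by (rule sum_symmetric_bilinear) (simp add: B_def sym)
  also have "\<dots> = W_pairing f v w i"
    using True sqrt_half2[of "real (d i) - 1" "real (d i)"]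
    unfolding W_pairing_def B_def s_def
    by (auto simp: algebra_simps intro!: sum.cong arg_cong2[where f="(+)"])
  finally show ?thesis .
qed

lemma second_form_block_offdiag:
  assumes ij: "i < j"
  shows "second_form_block f g v w i j + second_form_block f g v w j i = G_pairing g v w i j"
proof -
  have "second_form_block f g v w j i =
      (\<Sum>l\<in>{1..n j}. \<Sum>k\<in>{1..n i}. v (idx1 j l) * g i j k l * w (idx1 i k))"
    unfolding second_form_block_def using ij by (simp add: Lmat_def)
  also have "\<dots> = (\<Sum>k\<in>{1..n i}. \<Sum>l\<in>{1..n j}. v (idx1 j l) * g i j k l * w (idx1 i k))"
    by (rule sum.swap)
  finally show ?thesis
    unfolding second_form_block_def G_pairing_def using ij
    by (simp add: Lmat_def sum.distrib[symmetric] algebra_simps)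
qed

lemma second_form_decomp:
  assumes sym: "\<forall>i k l. f i k l = f i l k"
  shows "second_form f g v w =
    (\<Sum>i\<in>{1..r}. W_pairing f v w i) + (\<Sum>i\<in>{1..r}. \<Sum>j\<in>{i<..r}. G_pairing g v w i j)"
proof -
  let ?B = "second_form_block f g v w"
  have "second_form f g v w = (\<Sum>i\<in>{1..r}. \<Sum>j\<in>{1..r}. ?B i j)"
    unfolding second_form_def second_form_block_def by (intro sum.cong refl sum.swap)
  also have "\<dots> = (\<Sum>i\<in>{1..r}. ?B i i + (\<Sum>j\<in>{1..r}-{i}. ?B i j))"
    by (intro sum.cong refl) (subst sum.remove, auto)
  also have "\<dots> = (\<Sum>i\<in>{1..r}. ?B i i) + (\<Sum>i\<in>{1..r}. \<Sum>j\<in>{i<..r}. ?B i j + ?B j i)"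
    using sum_offdiag_pairs[of ?B r] by (simp add: sum.distrib)
  also have "\<dots> = (\<Sum>i\<in>{1..r}. W_pairing f v w i) + (\<Sum>i\<in>{1..r}. \<Sum>j\<in>{i<..r}. G_pairing g v w i j)"
    by (simp add: second_form_block_diag[OF sym] second_form_block_offdiag)
  finally show ?thesis .
qed

lemma ip_field_deriv_normal:
  assumes fd: "field_deriv v w \<gamma> V D" and P: "P \<in> Pspace r n d" and sym: "\<forall>i k l. f i k l = f i l k"
  shows "ip r n d D (\<lambda>a. P a + (\<Sum>i\<in>{1..r}. Wcomp r n d f i a)
      + (\<Sum>i\<in>{1..r}. \<Sum>j\<in>{i<..r}. Gcomp r n d g i j a)) = second_form f g v w"
proof -
  have "ip r n d D (\<lambda>a. P a + (\<Sum>i\<in>{1..r}. Wcomp r n d f i a)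
        + (\<Sum>i\<in>{1..r}. \<Sum>j\<in>{i<..r}. Gcomp r n d g i j a)) =
      ip r n d D P + (\<Sum>i\<in>{1..r}. ip r n d D (Wcomp r n d f i))
        + (\<Sum>i\<in>{1..r}. \<Sum>j\<in>{i<..r}. ip r n d D (Gcomp r n d g i j))"
    unfolding ip_add ip_sum[OF finite_atLeastAtMost] ip_sum[OF finite_greaterThanAtMost] by simp
  also have "\<dots> = (\<Sum>i\<in>{1..r}. W_pairing f v w i) + (\<Sum>i\<in>{1..r}. \<Sum>j\<in>{i<..r}. G_pairing g v w i j)"
    using ip_field_deriv_Pspace[OF fd P] ip_field_deriv_Wcomp[OF fd] ip_field_deriv_Gcomp[OF fd]
    by (auto intro!: sum.cong)
  also have "\<dots> = second_form f g v w" by (rule second_form_decomp[OF sym, symmetric])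
  finally show ?thesis .
qed

lemma second_form_idx1_delta:
  assumes i: "i \<in> {1..r}" and k: "k \<in> {1..n i}" and j: "j \<in> {1..r}" and l: "l \<in> {1..n j}"
  shows "second_form f g (\<lambda>a. if a = idx1 i k then 1 else 0) (\<lambda>a. if a = idx1 j l then 1 else 0) =
    Lmat d f g i k j l"
proof -
  have "second_form f g (\<lambda>a. if a = idx1 i k then 1 else 0) (\<lambda>a. if a = idx1 j l then 1 else 0) =
      (\<Sum>i'\<in>{1..r}. \<Sum>k'\<in>{1..n i'}. (\<Sum>j'\<in>{1..r}. \<Sum>l'\<in>{1..n j'}.
        Lmat d f g i' k' j' l' * (if idx1 j' l' = idx1 j l then 1 else 0)) *
        (if idx1 i' k' = idx1 i k then 1 else 0))"
    unfolding second_form_def by (intro sum.cong refl) (auto simp: sum_distrib_right)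
  also have "\<dots> = (\<Sum>i'\<in>{1..r}. \<Sum>k'\<in>{1..n i'}.
      Lmat d f g i' k' j l * (if idx1 i' k' = idx1 i k then 1 else 0))"
    by (intro sum.cong refl, subst sum_idx1_delta[OF j l]) (auto simp: idx1_eq_iff[OF _ _ j l])
  also have "\<dots> = Lmat d f g i k j l"
    by (rule sum_idx1_delta[OF i k]) (auto simp: idx1_eq_iff[OF _ _ i k])
  finally show ?thesis .
qed

definition weingarten_op ::
    "(nat \<Rightarrow> nat \<Rightarrow> nat \<Rightarrow> real) \<Rightarrow> (nat \<Rightarrow> nat \<Rightarrow> nat \<Rightarrow> nat \<Rightarrow> real) \<Rightarrow> tvec \<Rightarrow> tvec" where
  "weingarten_op f g w = (\<lambda>a. \<Sum>i\<in>{1..r}. \<Sum>k\<in>{1..n i}.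
     (\<Sum>j\<in>{1..r}. \<Sum>l\<in>{1..n j}. Lmat d f g i k j l * w (idx1 j l)) * (if a = idx1 i k then 1 else 0))"

lemma weingarten_op_is_weingarten:
  assumes F: "\<And>v w \<gamma> V D. field_deriv v w \<gamma> V D \<Longrightarrow> ip r n d D F = second_form f g v w"
  shows "is_weingarten r n d E F (weingarten_op f g)"
  unfolding is_weingarten_def
proof (intro ballI conjI allI impI)
  fix w assume w: "w \<in> tangent r n d E"
  show "weingarten_op f g w \<in> tangent r n d E"
    unfolding weingarten_op_def by (rule idx1_span_tangent)
  fix v V \<gamma> D assume v: "v \<in> tangent r n d E"
    and h: "\<gamma> 0 = E \<and> (\<forall>\<^sub>F t in nhds 0. \<gamma> t \<in> SV r n d) \<and> curve_deriv r n d \<gamma> w \<and>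
           V E = v \<and> (\<forall>\<^sub>F t in nhds 0. V (\<gamma> t) \<in> tangent r n d (\<gamma> t)) \<and>
           curve_deriv r n d (\<lambda>t. V (\<gamma> t)) D"
  have "ip r n d v (weingarten_op f g w) = (\<Sum>i\<in>{1..r}. \<Sum>k\<in>{1..n i}.
      (\<Sum>j\<in>{1..r}. \<Sum>l\<in>{1..n j}. Lmat d f g i k j l * w (idx1 j l)) * v (idx1 i k))"
    unfolding weingarten_op_def by (simp add: ip_sum ip_scaled_delta idx1_in_T)
  also have "\<dots> = second_form f g v w" unfolding second_form_def
    by (intro sum.cong refl) (simp add: sum_distrib_left sum_distrib_right mult_ac)
  also have "\<dots> = ip r n d D F"
    using w v h by (intro F[of v w \<gamma> V D, symmetric]) (unfold field_deriv_def, blast)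
  finally show "ip r n d v (weingarten_op f g w) = ip r n d D F" .
qed

lemma is_weingarten_idx1_coord:
  assumes L: "is_weingarten r n d E F L" and w: "w \<in> tangent r n d E"
    and i: "i \<in> {1..r}" and k: "k \<in> {1..n i}"
  obtains \<gamma> V D where "field_deriv (\<lambda>a. if a = idx1 i k then 1 else 0) w \<gamma> V D"
    and "L w (idx1 i k) = ip r n d D F"
proof -
  obtain \<gamma> V D where fd: "field_deriv (\<lambda>a. if a = idx1 i k then 1 else 0) w \<gamma> V D"
    using field_deriv_exists[OF i k w] by blast
  then have "ip r n d (\<lambda>a. if a = idx1 i k then 1 else 0) (L w) = ip r n d D F"
    using L w idx1_delta_tangent[OF i k] unfolding is_weingarten_def field_deriv_def by blast
  then show thesis using that fd ip_delta_left[OF idx1_in_T[OF i k]] by simp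
qed

lemma weingarten_matrix_entry:
  assumes L: "is_weingarten r n d E F L"
    and F: "\<And>v w \<gamma> V D. field_deriv v w \<gamma> V D \<Longrightarrow> ip r n d D F = second_form f g v w"
    and i: "i \<in> {1..r}" and k: "k \<in> {1..n i}" and j: "j \<in> {1..r}" and l: "l \<in> {1..n j}"
  shows "ip r n d (tbasis r n d i k) (L (tbasis r n d j l)) = Lmat d f g i k j l"
proof -
  obtain \<gamma> V D where fd: "field_deriv (\<lambda>a. if a = idx1 i k then 1 else 0) (tbasis r n d j l) \<gamma> V D"
    and "L (tbasis r n d j l) (idx1 i k) = ip r n d D F"
    using is_weingarten_idx1_coord[OF L _ i k] idx1_delta_tangent[OF j l] tbasis_eq[OF j l] by metis
  then show ?thesis
    using F[OF fd] second_form_idx1_delta[OF i k j l] tbasis_eq ip_delta_left[OF idx1_in_T[OF i k]]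
      i k j l by simp
qed

lemma weingarten_Pspace_zero:
  assumes L: "is_weingarten r n d E P L" and P: "P \<in> Pspace r n d" and w: "w \<in> tangent r n d E"
  shows "L w = (\<lambda>_. 0)"
proof
  fix a
  show "L w a = 0"
  proof (cases "a \<in> idx1_set")
    case True
    then obtain i k where ik: "i \<in> {1..r}" "k \<in> {1..n i}" "a = idx1 i k"
      unfolding idx1_set_def by blast
    obtain \<gamma> V D where "field_deriv (\<lambda>a. if a = idx1 i k then 1 else 0) w \<gamma> V D"
      and "L w (idx1 i k) = ip r n d D P"
      using is_weingarten_idx1_coord[OF L w ik(1,2)] .
    then show ?thesis using ip_field_deriv_Pspace[OF _ P] ik(3) by simp
  next
    case False
    have "L w \<in> tangent r n d E" using L w unfolding is_weingarten_def by blast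
    then show ?thesis using tangent_E_support False by blast
  qed
qed

end

theorem theorem3p9:
  fixes r :: nat and n d :: "nat \<Rightarrow> nat"
    and f :: "nat \<Rightarrow> nat \<Rightarrow> nat \<Rightarrow> real"
    and g :: "nat \<Rightarrow> nat \<Rightarrow> nat \<Rightarrow> nat \<Rightarrow> real"
    and P F :: tvec
  assumes "1 \<le> r"
    and "\<forall>i\<in>{1..r}. 1 \<le> n i \<and> 1 \<le> d i"
    and "\<forall>i k l. f i k l = f i l k"
    and "P \<in> Pspace r n d"
    and "F = (\<lambda>a. P a + (\<Sum>i\<in>{1..r}. Wcomp r n d f i a)
                     + (\<Sum>i\<in>{1..r}. \<Sum>j\<in>{i<..r}. Gcomp r n d g i j a))"
  shows "(\<exists>L. is_weingarten r n d (Epoint r n d) F L)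
       \<and> (\<forall>L. is_weingarten r n d (Epoint r n d) F L \<longrightarrow>
            (\<forall>i\<in>{1..r}. \<forall>k\<in>{1..n i}. \<forall>j\<in>{1..r}. \<forall>l\<in>{1..n j}.
               ip r n d (tbasis r n d i k) (L (tbasis r n d j l)) = Lmat d f g i k j l))
       \<and> (\<forall>L. is_weingarten r n d (Epoint r n d) P L \<longrightarrow>
            (\<forall>w\<in>tangent r n d (Epoint r n d). L w = (\<lambda>_. 0)))"
proof -
  interpret segre_veronese r n d using assms(2) by unfold_locales auto
  have F_pairing: "ip r n d D F = second_form f g v w" if "field_deriv v w \<gamma> V D" for v w \<gamma> V D
    unfolding assms(5) by (rule ip_field_deriv_normal[OF that assms(4,3)])
  have "is_weingarten r n d E F (weingarten_op f g)"
    by (rule weingarten_op_is_weingarten, rule F_pairing)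
  moreover have "ip r n d (tbasis r n d i k) (L (tbasis r n d j l)) = Lmat d f g i k j l"
    if "is_weingarten r n d E F L" "i \<in> {1..r}" "k \<in> {1..n i}" "j \<in> {1..r}" "l \<in> {1..n j}"
    for L i k j l
    by (rule weingarten_matrix_entry[OF that(1) _ that(2-5)], rule F_pairing)
  moreover have "L w = (\<lambda>_. 0)" if "is_weingarten r n d E P L" "w \<in> tangent r n d E" for L w
    by (rule weingarten_Pspace_zero[OF that(1) assms(4) that(2)])
  ultimately show ?thesis by blast
qed

end
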